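(* Consider the following network model. Let $q$ be a prime power, $K\ge1$, $L\ge1$, $N_{\mathrm S}\ge K$, $N_{\mathrm R}\ge1$. A source S draws $N_{\mathrm S}$ coefficient vectors i.i.d. uniformly from $\mathbb{F}_q^K$ and broadcasts one packet per vector. Each transmitted packet is erased on the link S$\to$D with probability $\epsilon_{\mathrm{SD}}$ and on the link S$\to\mathrm R_j$ with probability $\epsilon_{\mathrm{SR}_j}$ ($j=1,\dots,L$), all erasures independent across links and packets and independent of the coefficients. Relay $\mathrm R_j$, having received $m_j$ packets with coefficient matrix $\mathbf{C}_{\mathrm S\to\mathrm R_j}\in\mathbb{F}_q^{m_j\times K}$, draws $\mathbf{G}_j\in\mathbb{F}_q^{N_{\mathrm R}\times m_j}$ with i.i.d. uniform entries and transmits the $N_{\mathrm R}$ rows of $\mathbf{G}_j\mathbf{C}_{\mathrm S\to\mathrm R_j}$ to D, each independently erased with probability $\epsilon_{\mathrm R_j\mathrm D}$. D stacks all coefficient vectors it received (directly from S and from the relays) into $\mathbf{C}_{\mathrm D}$, and decoding succeeds iff $\operatorname{rank}(\mathbf{C}_{\mathrm D})=K$. Let $P^{(L)}_{\mathrm R}$ be the probability of successful decoding. Then $$P^{(L)}_{\mathrm R}\le \sum_{(m,m_{\mathrm D},m_{\mathrm{RD}})}\alpha(m,m_{\mathrm D},m_{\mathrm{RD}})\sum_{m'_1,\dots,m'_L}\prod_{j=1}^L\mathcal{B}(m'_j,N_{\mathrm R},\epsilon_{\mathrm R_j\mathrm D})\;\mathbb{P}^{(2)}\big(m'+m_{\mathrm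 D},\,m-m_{\mathrm{RD}}+m_{\mathrm D},\,m_{\mathrm D};K\big),$$ where $m'=\sum_{j}m'_j$, $\tilde\epsilon_{\mathrm{SR}}=\prod_{j=1}^L\epsilon_{\mathrm{SR}_j}$, $$\alpha(m,m_{\mathrm D},m_{\mathrm{RD}})=\binom{N_{\mathrm S}}{m_{\mathrm{RD}}}\binom{N_{\mathrm S}-m_{\mathrm{RD}}}{m-m_{\mathrm{RD}}}\binom{N_{\mathrm S}-m}{m_{\mathrm D}-m_{\mathrm{RD}}}(1-\tilde\epsilon_{\mathrm{SR}})^{m}\tilde\epsilon_{\mathrm{SR}}^{\,N_{\mathrm S}-m}(1-\epsilon_{\mathrm{SD}})^{m_{\mathrm D}}\epsilon_{\mathrm{SD}}^{\,N_{\mathrm S}-m_{\mathrm D}},$$ $\mathcal{B}(k,N,\epsilon)=\binom{N}{k}(1-\epsilon)^k\epsilon^{N-k}$, and the sums range over integers with $m+m_{\mathrm D}\ge K$, $m,m_{\mathrm D}\le N_{\mathrm S}$, $\max(0,m+m_{\mathrm D}-N_{\mathrm S})\le m_{\mathrm{RD}}\le\min(m,m_{\mathrm D})$, $0\le m'_j\le N_{\mathrm R}$ for all $j$, and $m'\ge K-m_{\mathrm D}$. Here $\mathbb{P}^{(2)}(m_1,m_2,m_{12};K)=\sum_{i=\max(0,K-m_1+m_{12},K-m_2+m_{12})}^{\min(m_{12},K)}\mathbb{P}_i(m_{12},K)\,\mathbb{P}(m_1-m_{12},K-i)\,\mathbb{P}(m_2-m_{12},K-i)$, $\mathbb{P}(a,b)=\prod_{i=0}^{b-1}(1-q^{i-a})$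 and $\mathbb{P}_r(a,b)=q^{-a(b-r)}\prod_{i=0}^{r-1}\frac{q^{b-i}-1}{q^{r-i}-1}\prod_{i=0}^{r-1}(1-q^{i-a})$.
   Context: In the summation, $m$ stands for the number of distinct source packets received by at least one relay, $m_{\mathrm D}$ for the number received by D from S, and $m_{\mathrm{RD}}$ for the number received both by D and by at least one relay. $\mathbb{P}(a,b)$ (resp. $\mathbb{P}_r(a,b)$) is the probability that a uniformly random $a\times b$ matrix over $\mathbb{F}_q$ has rank $b$ (resp. $r$). *)

theory Defs
  imports "HOL-Analysis.Analysis" "HOL-Probability.Probability"
begin

(* Rank of a matrix given as the list of its rows (vectors in F^K, K = CARD('k)).
   Same as the library's row-rank definition  rank A = vec.dim (rows A). *)
definition row_list_rank :: "('a::field ^ 'k) list \<Rightarrow> nat" where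
  "row_list_rank rs = vec.dim (set rs)"

primrec seq_pmf :: "'b pmf list \<Rightarrow> 'b list pmf" where
  "seq_pmf [] = return_pmf []"
| "seq_pmf (p # ps) = do {x \<leftarrow> p; xs \<leftarrow> seq_pmf ps; return_pmf (x # xs)}"

definition mat_mult_rows :: "'a list list \<Rightarrow> ('a::field ^ 'k) list \<Rightarrow> ('a ^ 'k) list" where
  "mat_mult_rows G C = map (\<lambda>g. \<Sum>i<length C. (g ! i) *s (C ! i)) G"

(* keep those entries of xs whose flag is True (non-erased packets) *)
definition received :: "'b list \<Rightarrow> bool list \<Rightarrow> 'b list" where
  "received xs flags = [xs ! i. i \<leftarrow> [0..<length xs], flags ! i]"

definition relay_pmf :: "nat \<Rightarrow> nat \<Rightarrow> real \<Rightarrow> real \<Rightarrow> ('a::{finite,field} ^ 'k) list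
                         \<Rightarrow> ('a ^ 'k) list pmf" where
  "relay_pmf NS NR eSR eRD C = do {
     sr \<leftarrow> replicate_pmf NS (bernoulli_pmf (1 - eSR));
     let Cj = received C sr;
     G \<leftarrow> replicate_pmf NR (replicate_pmf (length Cj) (pmf_of_set (UNIV :: 'a set)));
     rd \<leftarrow> replicate_pmf NR (bernoulli_pmf (1 - eRD));
     return_pmf (received (mat_mult_rows G Cj) rd)
   }"

definition network_pmf :: "nat \<Rightarrow> nat \<Rightarrow> nat \<Rightarrow> real \<Rightarrow> (nat \<Rightarrow> real) \<Rightarrow> (nat \<Rightarrow> real)
                           \<Rightarrow> ('a::{finite,field} ^ 'k) itself \<Rightarrow> bool pmf" where
  "network_pmf L NS NR eSD eSR eRD _ = do {
     C \<leftarrow> replicate_pmf NS (pmf_of_set (UNIV :: ('a ^ 'k) set));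
     sd \<leftarrow> replicate_pmf NS (bernoulli_pmf (1 - eSD));
     outs \<leftarrow> seq_pmf (map (\<lambda>j. relay_pmf NS NR (eSR j) (eRD j) C) [0..<L]);
     let CD = received C sd @ concat outs;
     return_pmf (row_list_rank CD = CARD('k))
   }"

definition success_prob :: "nat \<Rightarrow> nat \<Rightarrow> nat \<Rightarrow> real \<Rightarrow> (nat \<Rightarrow> real) \<Rightarrow> (nat \<Rightarrow> real)
                           \<Rightarrow> ('a::{finite,field} ^ 'k) itself \<Rightarrow> real" where
  "success_prob L NS NR eSD eSR eRD T = pmf (network_pmf L NS NR eSD eSR eRD T) True"

definition PP :: "real \<Rightarrow> nat \<Rightarrow> nat \<Rightarrow> real" where
  "PP q a b = (\<Prod>i<b. 1 - q powi (int i - int a))"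

definition Pr :: "real \<Rightarrow> nat \<Rightarrow> nat \<Rightarrow> nat \<Rightarrow> real" where
  "Pr q r a b = q powi (- (int a * (int b - int r)))
     * (\<Prod>i<r. (q ^ (b - i) - 1) / (q ^ (r - i) - 1))
     * (\<Prod>i<r. 1 - q powi (int i - int a))"

definition P2 :: "real \<Rightarrow> nat \<Rightarrow> nat \<Rightarrow> nat \<Rightarrow> nat \<Rightarrow> real" where
  "P2 q m1 m2 m12 K = (\<Sum>i \<in> {i::nat. int K - int m1 + int m12 \<le> int i
                                   \<and> int K - int m2 + int m12 \<le> int i \<and> i \<le> min m12 K}.
       Pr q i m12 K * PP q (m1 - m12) (K - i) * PP q (m2 - m12) (K - i))"

definition Bin :: "nat \<Rightarrow> nat \<Rightarrow> real \<Rightarrow> real" where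
  "Bin k N e = real (N choose k) * (1 - e) ^ k * e ^ (N - k)"

definition alpha :: "nat \<Rightarrow> nat \<Rightarrow> (nat \<Rightarrow> real) \<Rightarrow> real \<Rightarrow> nat \<Rightarrow> nat \<Rightarrow> nat \<Rightarrow> real" where
  "alpha L NS eSR eSD m mD mRD =
     (let et = (\<Prod>j<L. eSR j) in
      real (NS choose mRD) * real ((NS - mRD) choose (m - mRD)) * real ((NS - m) choose (mD - mRD))
      * (1 - et) ^ m * et ^ (NS - m) * (1 - eSD) ^ mD * eSD ^ (NS - mD))"

definition upper_bound :: "real \<Rightarrow> nat \<Rightarrow> nat \<Rightarrow> nat \<Rightarrow> nat \<Rightarrow> real \<Rightarrow> (nat \<Rightarrow> real)
                           \<Rightarrow> (nat \<Rightarrow> real) \<Rightarrow> real" where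
  "upper_bound q K L NS NR eSD eSR eRD =
    (\<Sum>(m, mD, mRD) \<in> {(m, mD, mRD). K \<le> m + mD \<and> m \<le> NS \<and> mD \<le> NS
                         \<and> int m + int mD - int NS \<le> int mRD \<and> mRD \<le> min m mD}.
       alpha L NS eSR eSD m mD mRD *
       (\<Sum>mp \<in> {mp \<in> PiE {..<L} (\<lambda>_. {..NR}). int K - int mD \<le> int (\<Sum>j<L. mp j)}.
          (\<Prod>j<L. Bin (mp j) NR (eRD j)) *
          P2 q ((\<Sum>j<L. mp j) + mD) (m - mRD + mD) mD K))"

end

(*
  Let PP q N b be the probability that N uniformly random vectors of F_q^K, added to a subspace of
  codimension b, span the whole space. A packet forwarded by relay R_j is a uniformly random
  combination of the source packets the relay received, and such a vector lies in any fixed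
  subspace at least as often as a uniform vector does. Hence such a packet followed by N uniform
  vectors completes a subspace with probability at most PP q (N + 1) b: each of the m' relay packets
  reaching D may be replaced by a fresh uniform vector, as long as one remembers that the relay
  packets lie in the span of the source packets received by some relay. This bounds the decoding
  probability by an expectation over the erasure patterns alone. For fixed patterns, the m_D source
  packets seen by D directly and the m - m_RD ones seen only through relays are independent uniform
  vectors, and conditioning on the rank of the former gives P^(2)(m' + m_D, m - m_RD + m_D, m_D; K).
  Averaging over the independent erasures, where a source packet reaches some relay with probability
  1 - prod_j eSR j, yields the stated sum.
*)

theory Submission
  imports Defs
begin

section \<open>Probability mass functions\<close>

abbreviation E :: "'b pmf \<Rightarrow> ('b \<Rightarrow> real) \<Rightarrow> real" where
  "E p f \<equiv> measure_pmf.expectation p f"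

lemma bernoulli_pmf_0: "bernoulli_pmf 0 = return_pmf False"
  by (rule pmf_eqI) (auto simp: indicator_def)

lemma replicate_pmf_return_pmf: "replicate_pmf n (return_pmf x) = return_pmf (replicate n x)"
  by (induction n) (auto simp: bind_return_pmf)

lemma map_replicate_pmf: "map_pmf (map f) (replicate_pmf n p) = replicate_pmf n (map_pmf f p)"
proof (induction n)
  case (Suc n)
  have "replicate_pmf (Suc n) (map_pmf f p)
      = map_pmf f p \<bind> (\<lambda>x. map_pmf (map f) (replicate_pmf n p) \<bind> (\<lambda>xs. return_pmf (x # xs)))"
    by (simp add: Suc.IH)
  then show ?case
    by (simp add: bind_map_pmf map_bind_pmf map_pmf_def bind_assoc_pmf bind_return_pmf)
qed simp

lemma seq_pmf_append:
  "seq_pmf (ps @ qs) = do {xs \<leftarrow> seq_pmf ps; ys \<leftarrow> seq_pmf qs; return_pmf (xs @ ys)}"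
  by (induction ps) (simp_all add: bind_return_pmf bind_return_pmf' bind_assoc_pmf)

lemma E_bind:
  fixes f :: "'c \<Rightarrow> real"
  assumes "\<And>y. \<bar>f y\<bar> \<le> B"
  shows "E (bind_pmf p q) f = E p (\<lambda>x. E (q x) f)"
  unfolding measure_pmf_bind
  by (rule integral_bind[where K="count_space UNIV" and B=B and B'=1])
     (auto simp: assms measure_pmf.emeasure_space_1 prob_space_imp_subprob_space
           measure_pmf.prob_space_axioms measure_pmf.finite_measure_axioms
           intro!: measure_pmf_in_subprob_algebra)

lemma E_mono:
  fixes f g :: "'c \<Rightarrow> real"
  assumes "\<And>y. \<bar>f y\<bar> \<le> B" "\<And>y. \<bar>g y\<bar> \<le> B"
    and "\<And>y. y \<in> set_pmf p \<Longrightarrow> f y \<le> g y"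
  shows "E p f \<le> E p g"
proof -
  have "integrable p h" if "\<And>y. \<bar>h y\<bar> \<le> B" for h :: "'c \<Rightarrow> real"
    by (rule measure_pmf.integrable_const_bound[where B=B]) (auto simp: that)
  then show ?thesis
    by (intro integral_mono_AE) (auto simp: assms AE_measure_pmf_iff)
qed

lemma E_cong:
  assumes "\<And>y. y \<in> set_pmf p \<Longrightarrow> f y = g y"
  shows "E p f = E p g"
  by (rule integral_cong_AE) (auto simp: assms AE_measure_pmf_iff)

lemma E_abs_le:
  fixes f :: "'c \<Rightarrow> real"
  assumes "\<And>y. \<bar>f y\<bar> \<le> B"
  shows "\<bar>E p f\<bar> \<le> B"
proof -
  have "\<bar>E p f\<bar> \<le> E p (\<lambda>y. \<bar>f y\<bar>)" by (rule integral_abs_bound)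
  also have "\<dots> \<le> E p (\<lambda>y. B)"
    using assms by (intro E_mono[where B=B]) (auto intro: order_trans[OF abs_ge_zero])
  finally show ?thesis by simp
qed

lemma E_commute:
  fixes f :: "'c \<Rightarrow> 'd \<Rightarrow> real"
  assumes f: "\<And>x y. \<bar>f x y\<bar> \<le> B"
  shows "E p (\<lambda>x. E q (\<lambda>y. f x y)) = E q (\<lambda>y. E p (\<lambda>x. f x y))"
proof -
  have f': "\<bar>case_prod f z\<bar> \<le> B" for z by (cases z) (simp add: f)
  have "E p (\<lambda>x. E q (\<lambda>y. f x y)) = E (p \<bind> (\<lambda>x. q \<bind> (\<lambda>y. return_pmf (x, y)))) (case_prod f)"
    by (simp add: E_bind[OF f'])
  also have "\<dots> = E (q \<bind> (\<lambda>y. p \<bind> (\<lambda>x. return_pmf (x, y)))) (case_prod f)"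
    by (subst bind_commute_pmf) (rule refl)
  also have "\<dots> = E q (\<lambda>y. E p (\<lambda>x. f x y))"
    by (simp add: E_bind[OF f'])
  finally show ?thesis .
qed

lemma E_replicate_pmf_Suc:
  assumes "\<And>xs. \<bar>f xs\<bar> \<le> B"
  shows "E (replicate_pmf (Suc n) p) f = E p (\<lambda>x. E (replicate_pmf n p) (\<lambda>xs. f (x # xs)))"
  by (simp add: E_bind[where B=B] assms)

lemma E_seq_pmf_Cons:
  assumes "\<And>xs. \<bar>f xs\<bar> \<le> B"
  shows "E (seq_pmf (p # ps)) f = E p (\<lambda>x. E (seq_pmf ps) (\<lambda>xs. f (x # xs)))"
  by (simp add: E_bind[where B=B] assms)

lemma E_seq_pmf_snoc:
  assumes "\<And>xs. \<bar>f xs\<bar> \<le> B"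
  shows "E (seq_pmf (ps @ [p])) f = E (seq_pmf ps) (\<lambda>xs. E p (\<lambda>x. f (xs @ [x])))"
  unfolding seq_pmf_append by (simp add: E_bind[where B=B] assms bind_return_pmf)

lemma E_pair_pmf:
  fixes f :: "'c \<times> 'd \<Rightarrow> real"
  assumes "\<And>z. \<bar>f z\<bar> \<le> B"
  shows "E (pair_pmf p q) f = E p (\<lambda>x. E q (\<lambda>y. f (x, y)))"
  unfolding pair_pmf_def by (simp add: E_bind[where B=B] assms)

lemma E_affine:
  fixes f :: "'b \<Rightarrow> real"
  assumes "\<And>x. \<bar>f x\<bar> \<le> B"
  shows "E p (\<lambda>x. a + f x * c) = a + E p f * c"
proof -
  have "integrable p f"
    by (rule measure_pmf.integrable_const_bound[where B=B]) (auto simp: assms)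
  then show ?thesis by simp
qed

lemma E_indicator: "E p (\<lambda>x. of_bool (x \<in> A)) = measure_pmf.prob p A"
  by (simp add: indicator_def[symmetric])

lemma pmf_map_pmf_eq_E: "pmf (map_pmf f p) x = E p (\<lambda>y. of_bool (f y = x))"
  by (simp add: pmf_map E_indicator[of _ "f -` {x}", symmetric])


section \<open>The quantities $\mathbb{P}(a,b)$ and $\mathbb{P}_r(a,b)$\<close>

lemma powi_minus_of_nat: "e = - int n \<Longrightarrow> (q::real) powi e = 1 / q ^ n"
  by (simp add: power_int_minus divide_inverse)

lemma card_field_gt_1: "real CARD('a::{finite,field}) > 1"
proof -
  have "card {0::'a, 1} \<le> CARD('a)" by (rule card_mono) auto
  then show ?thesis by simp
qed

lemma PP_0_right [simp]: "PP q n 0 = 1"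
  by (simp add: PP_def)

lemma PP_Suc_right: "PP q n (Suc b) = PP q n b * (1 - q powi (int b - int n))"
  by (simp add: PP_def)

lemma PP_Suc_Suc: "PP q (Suc a) (Suc c) = (1 - 1 / q ^ Suc a) * PP q a c"
proof -
  have "q powi (int 0 - int (Suc a)) = 1 / q ^ Suc a" by (rule powi_minus_of_nat) simp
  then show ?thesis unfolding PP_def prod.lessThan_Suc_shift by simp
qed

lemma PP_eq_0: "n < b \<Longrightarrow> PP q n b = 0"
  unfolding PP_def by (rule prod_zero) (auto intro!: bexI[where x=n])

lemma PP_0_left: "PP q 0 b = of_bool (b = 0)"
  using PP_eq_0[of 0 b q] by auto

lemma PP_nonneg:
  assumes "q \<ge> 1"
  shows "0 \<le> PP q n b"
proof (cases "b \<le> n")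
  case True
  have "q powi (int i - int n) \<le> 1" if "i < b" for i
    using assms that True power_int_increasing[of "int i - int n" 0 q] by simp
  then show ?thesis unfolding PP_def by (intro prod_nonneg) auto
qed (simp add: PP_eq_0)

lemma PP_Suc_right_le:
  assumes "q \<ge> 1"
  shows "PP q n (Suc b) \<le> PP q n b"
proof (cases "b < n")
  case True
  then have "0 < q powi (int b - int n)" "q powi (int b - int n) \<le> 1"
    using assms power_int_increasing[of "int b - int n" 0 q] by auto
  then show ?thesis
    unfolding PP_Suc_right using PP_nonneg[OF assms, of n b] by (simp add: mult_left_le)
qed (simp add: PP_eq_0 PP_nonneg[OF assms])

lemma PP_le_1: "q \<ge> 1 \<Longrightarrow> PP q n b \<le> 1"
  by (induction b) (auto intro: order_trans[OF PP_Suc_right_le])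

lemma abs_PP_le_1: "q \<ge> 1 \<Longrightarrow> \<bar>PP q n b\<bar> \<le> 1"
  using PP_nonneg PP_le_1 by (simp add: abs_le_iff)

lemma abs_PP_card_le_1: "\<bar>PP (real CARD('a::{finite,field})) n b\<bar> \<le> 1"
  using card_field_gt_1[where 'a='a] by (intro abs_PP_le_1) simp

lemma PP_Suc_left:
  assumes "q \<noteq> 0" and "b \<ge> 1"
  shows "PP q (Suc n) b = PP q n (b - 1) + q powi (- int b) * (PP q n b - PP q n (b - 1))"
proof -
  obtain c where b: "b = Suc c" using \<open>b \<ge> 1\<close> by (cases b) auto
  have "q powi (- int b) * q powi (int c - int n) = q powi (int 0 - int (Suc n))"
    using assms by (simp add: b power_int_add[symmetric])
  also have "\<dots> = 1 / q ^ Suc n" by (rule powi_minus_of_nat) simp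
  finally have "q powi (- int b) * q powi (int c - int n) = 1 / q ^ Suc n" .
  then show ?thesis
    unfolding b by (simp add: PP_Suc_Suc PP_Suc_right[of q n c] algebra_simps)
qed

definition gauss_binomial :: "real \<Rightarrow> nat \<Rightarrow> nat \<Rightarrow> real" where
  "gauss_binomial q b r = (\<Prod>i<r. (q ^ (b - i) - 1) / (q ^ (r - i) - 1))"

lemma gauss_binomial_Suc:
  "gauss_binomial q b (Suc c) = gauss_binomial q b c * ((q ^ (b - c) - 1) / (q ^ Suc c - 1))"
proof -
  have "(\<Prod>i<r. q ^ (r - i) - 1) = (\<Prod>j<r. q ^ Suc j - 1)" for r
    using prod.nat_diff_reindex[where g="\<lambda>j. q ^ Suc j - 1" and n=r]
    by (simp add: Suc_diff_Suc)
  then have "gauss_binomial q b r = (\<Prod>i<r. q ^ (b - i) - 1) / (\<Prod>j<r. q ^ Suc j - 1)" for r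
    unfolding gauss_binomial_def by (simp add: prod_dividef)
  then show ?thesis by simp
qed

lemma Pr_eq: "Pr q r a b = q powi (- (int a * (int b - int r))) * gauss_binomial q b r * PP q a r"
  by (simp add: Pr_def gauss_binomial_def PP_def)

lemma Pr_eq_0_rows: "a < r \<Longrightarrow> Pr q r a b = 0"
  by (simp add: Pr_eq PP_eq_0)

lemma Pr_eq_0_cols: "b < r \<Longrightarrow> Pr q r a b = 0"
  unfolding Pr_eq gauss_binomial_def by (simp add: prod_zero_iff) (auto intro!: bexI[where x=b])

lemma Pr_0_rows: "Pr q r 0 b = of_bool (r = 0)"
  using Pr_eq_0_rows[of 0 r q b] by (auto simp: Pr_def)

lemma Pr_0_Suc: "q \<noteq> 0 \<Longrightarrow> Pr q 0 (Suc a) b = q powi (- int b) * Pr q 0 a b"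
  by (simp add: Pr_def power_int_add[symmetric] algebra_simps)

lemma Pr_Suc_Suc:
  assumes q: "q > 1" and "c < b"
  shows "Pr q (Suc c) (Suc a) b = q powi (int (Suc c) - int b) * Pr q (Suc c) a b
          + (1 - q powi (int c - int b)) * Pr q c a b"
proof -
  obtain d where b: "b = Suc (c + d)" using \<open>c < b\<close> less_iff_Suc_add by auto
  define X where "X = gauss_binomial q b c * PP q a c / q ^ (a * d)"
  define t where "t = (q ^ Suc d - 1) / (q ^ Suc c - 1)"
  have "q powi (- (int (Suc a) * (int b - int (Suc c)))) = 1 / (q ^ (a * d) * q ^ d)"
    by (rule powi_minus_of_nat[where n="a * d + d", unfolded power_add]) (simp add: b algebra_simps)
  then have lhs: "Pr q (Suc c) (Suc a) b = X * t * (1 - 1 / (q * q ^ a)) / q ^ d"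
    unfolding Pr_eq gauss_binomial_Suc PP_Suc_Suc X_def t_def
    by (simp add: b mult_ac)
  have "q powi (- (int a * (int b - int (Suc c)))) = 1 / q ^ (a * d)"
    by (rule powi_minus_of_nat) (simp add: b)
  then have rhs1: "Pr q (Suc c) a b = X * t * (1 - q ^ c / q ^ a)"
    unfolding Pr_eq gauss_binomial_Suc PP_Suc_right X_def t_def
    using q by (simp add: b power_int_diff)
  have "q powi (- (int a * (int b - int c))) = 1 / (q ^ (a * d) * q ^ a)"
    by (rule powi_minus_of_nat[where n="a * d + a", unfolded power_add]) (simp add: b algebra_simps)
  then have rhs2: "Pr q c a b = X / q ^ a"
    unfolding Pr_eq X_def by simp
  have coeffs: "q powi (int (Suc c) - int b) = 1 / q ^ d" "q powi (int c - int b) = 1 / q ^ Suc d"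
    by (rule powi_minus_of_nat, simp add: b)+
  have "q ^ Suc c - 1 \<noteq> 0"
    using q by (metis one_less_power right_minus_eq zero_less_Suc less_irrefl)
  then show ?thesis
    unfolding lhs rhs1 rhs2 coeffs t_def using q by (simp add: field_simps)
qed


section \<open>Random vectors and subspaces of $\mathbb{F}_q^K$\<close>

lemma subspace_scale_cancel:
  fixes x :: "'a::field ^ 'k"
  assumes "vec.subspace U" "t \<noteq> 0" "t *s x \<in> U"
  shows "x \<in> U"
proof -
  have "x = inverse t *s (t *s x)" using assms(2) by (simp add: vector_smult_assoc)
  then show ?thesis using vec.subspace_scale[OF assms(1,3)] by metis
qed

lemma card_span_independent:
  fixes B :: "('a::{finite,field} ^ 'k) set"
  assumes "finite B" "vec.independent B"
  shows "card (vec.span B) = CARD('a) ^ card B"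
  using assms
proof (induction B rule: finite_induct)
  case (insert b B)
  have indep: "vec.independent B" and b: "b \<notin> vec.span B"
    using insert.prems insert.hyps by (auto simp: vec.independent_insert)
  have span_eq: "vec.span (insert b B) = (\<lambda>(t, v). t *s b + v) ` (UNIV \<times> vec.span B)"
  proof (intro set_eqI iffI)
    fix x assume "x \<in> vec.span (insert b B)"
    then obtain t where "x - t *s b \<in> vec.span B" by (auto simp: vec.span_breakdown_eq)
    then show "x \<in> (\<lambda>(t, v). t *s b + v) ` (UNIV \<times> vec.span B)"
      by (intro image_eqI[where x="(t, x - t *s b)"]) auto
  next
    fix x assume "x \<in> (\<lambda>(t, v). t *s b + v) ` (UNIV \<times> vec.span B)"
    then obtain t v where "x = t *s b + v" "v \<in> vec.span B" by auto
    then show "x \<in> vec.span (insert b B)"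
      unfolding vec.span_breakdown_eq by (intro exI[where x=t]) simp
  qed
  have "inj_on (\<lambda>(t, v). t *s b + v) (UNIV \<times> vec.span B)"
  proof (rule inj_onI, clarsimp)
    fix t v t' v'
    assume v: "v \<in> vec.span B" "v' \<in> vec.span B" and eq: "t *s b + v = t' *s b + v'"
    have "(t - t') *s b = v' - v" using eq by (simp add: vec.scale_left_diff_distrib algebra_simps)
    then have "(t - t') *s b \<in> vec.span B" using v by (simp add: vec.span_diff)
    then have "t = t'" using b subspace_scale_cancel[OF vec.subspace_span, of "t - t'" b B] by auto
    then show "t = t' \<and> v = v'" using eq by simp
  qed
  then show ?case
    using insert.hyps insert.IH[OF indep] by (simp add: span_eq card_image card_cartesian_product)
qed simp

lemma card_span:
  fixes S :: "('a::{finite,field} ^ 'k) set"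
  shows "card (vec.span S) = CARD('a) ^ vec.dim S"
proof -
  obtain B where B: "B \<subseteq> S" "vec.independent B" "S \<subseteq> vec.span B" "card B = vec.dim S"
    by (rule vec.basis_exists)
  then have "vec.span B = vec.span S"
    by (metis vec.span_mono vec.span_span subset_antisym)
  then show ?thesis
    using card_span_independent[OF _ B(2)] B(2,4) vec.independent_bound_general by auto
qed

lemma measure_uniform_span:
  fixes S :: "('a::{finite,field} ^ 'k) set"
  shows "measure_pmf.prob (pmf_of_set UNIV) (vec.span S)
           = real CARD('a) powi (int (vec.dim S) - int CARD('k))"
  by (simp add: measure_pmf_of_set card_span CARD_vec power_int_diff)

lemma dim_le_card_index: "vec.dim (S :: ('a::field ^ 'k) set) \<le> CARD('k)"
  by (rule dim_subset_UNIV_cart_gen)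

lemma dim_eq_card_index_iff: "vec.dim (S :: ('a::field ^ 'k) set) = CARD('k) \<longleftrightarrow> vec.span S = UNIV"
  using vec.dim_eq_full[of S] vec_dim_card vec.dim_UNIV vec.dimension_def by metis

lemma dim_insert_full:
  "vec.dim (S :: ('a::field ^ 'k) set) = CARD('k) \<Longrightarrow> vec.dim (insert x S) = vec.dim S"
  using dim_le_card_index[of "insert x S"] by (auto simp: vec.dim_insert split: if_splits)

lemma card_line_hits_subspace:
  fixes c w :: "'a::{finite,field} ^ 'k"
  assumes U: "vec.subspace U" and c: "c \<notin> U"
  shows "card {t. w + t *s c \<in> U} = of_bool (w \<in> vec.span (insert c U))"
proof -
  have unique: "t = t'" if "w + t *s c \<in> U" "w + t' *s c \<in> U" for t t'
  proof -
    have "(w + t *s c) - (w + t' *s c) \<in> U" using that U by (intro vec.subspace_diff)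
    then have "(t - t') *s c \<in> U" by (simp add: vec.scale_left_diff_distrib)
    then show "t = t'" using c subspace_scale_cancel[OF U, of "t - t'" c] by auto
  qed
  have "(\<exists>t. w + t *s c \<in> U) \<longleftrightarrow> w \<in> vec.span (insert c U)"
    unfolding vec.span_breakdown_eq vec.span_eq_iff[THEN iffD2, OF U]
    by (metis diff_conv_add_uminus vector_sneg_minus1 vector_smult_assoc minus_minus)
  then show ?thesis
    using unique by (cases "w \<in> vec.span (insert c U)") (auto simp: card_1_singleton_iff)
qed

definition lincomb :: "'a list \<Rightarrow> ('a::field ^ 'k) list \<Rightarrow> 'a ^ 'k" where
  "lincomb g cs = (\<Sum>i<length cs. (g ! i) *s (cs ! i))"

lemma lincomb_Nil [simp]: "lincomb g [] = 0"
  by (simp add: lincomb_def)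

lemma lincomb_Cons [simp]: "lincomb (t # g) (c # cs) = t *s c + lincomb g cs"
  unfolding lincomb_def length_Cons sum.lessThan_Suc_shift by simp

lemma lincomb_in_span: "lincomb g cs \<in> vec.span (set cs)"
  unfolding lincomb_def by (intro vec.span_sum vec.span_scale vec.span_base) auto

lemma mat_mult_rows_eq_map_lincomb: "mat_mult_rows G C = map (\<lambda>g. lincomb g C) G"
  by (simp add: mat_mult_rows_def lincomb_def)

lemma E_lincomb_in_span:
  fixes S :: "('a::{finite,field} ^ 'k) set"
  shows "E (replicate_pmf (length cs) (pmf_of_set UNIV)) (\<lambda>g. of_bool (w + lincomb g cs \<in> vec.span S))
    = (if w \<in> vec.span (S \<union> set cs)
       then real CARD('a) ^ vec.dim S / real CARD('a) ^ vec.dim (S \<union> set cs) else 0)"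
proof (induction cs arbitrary: w)
  case (Cons c cs)
  define q where "q = real CARD('a)"
  define X where "X = S \<union> set cs"
  define r where "r = q ^ vec.dim S / q ^ vec.dim X"
  have "E (replicate_pmf (length (c # cs)) (pmf_of_set UNIV))
          (\<lambda>g. of_bool (w + lincomb g (c # cs) \<in> vec.span S))
      = E (pmf_of_set UNIV) (\<lambda>t. E (replicate_pmf (length cs) (pmf_of_set UNIV))
            (\<lambda>g. of_bool ((w + t *s c) + lincomb g cs \<in> vec.span S)))"
    unfolding length_Cons by (subst E_replicate_pmf_Suc[where B=1]) (simp_all add: add.assoc)
  also have "\<dots> = E (pmf_of_set UNIV) (\<lambda>t. if w + t *s c \<in> vec.span X then r else 0)"
    unfolding Cons.IH X_def r_def q_def ..
  also have "\<dots> = r * card {t. w + t *s c \<in> vec.span X} / q"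
    by (simp add: integral_pmf_of_set q_def sum.If_cases Int_def)
  also have "\<dots> = (if w \<in> vec.span (S \<union> set (c # cs))
       then q ^ vec.dim S / q ^ vec.dim (S \<union> set (c # cs)) else 0)"
  proof (cases "c \<in> vec.span X")
    case True
    then have "vec.span (S \<union> set (c # cs)) = vec.span X" "vec.dim (S \<union> set (c # cs)) = vec.dim X"
      by (simp_all add: X_def vec.span_redundant vec.dim_insert)
    moreover have "{t. w + t *s c \<in> vec.span X} = (if w \<in> vec.span X then UNIV else {})"
      using True by (auto simp: vec.span_add_eq vec.span_scale)
        (metis add_diff_cancel_right' vec.span_diff vec.span_scale)
    ultimately show ?thesis by (simp add: q_def r_def)
  next
    case False
    then have "vec.span (S \<union> set (c # cs)) = vec.span (insert c (vec.span X))"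
      "vec.dim (S \<union> set (c # cs)) = Suc (vec.dim X)"
      by (simp_all add: X_def vec.span_insert vec.span_span vec.dim_insert)
    then show ?thesis
      unfolding card_line_hits_subspace[OF vec.subspace_span False] by (simp add: q_def r_def)
  qed
  finally show ?case unfolding q_def .
qed simp

definition span_dominant :: "('a::{finite,field} ^ 'k) pmf \<Rightarrow> bool" where
  "span_dominant p \<longleftrightarrow>
     (\<forall>S. measure_pmf.prob (pmf_of_set UNIV) (vec.span S) \<le> measure_pmf.prob p (vec.span S))"

definition lincomb_pmf :: "('a::{finite,field} ^ 'k) list \<Rightarrow> ('a ^ 'k) pmf" where
  "lincomb_pmf cs = map_pmf (\<lambda>g. lincomb g cs) (replicate_pmf (length cs) (pmf_of_set UNIV))"

lemma set_lincomb_pmf: "set_pmf (lincomb_pmf cs) \<subseteq> vec.span (set cs)"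
  by (auto simp: lincomb_pmf_def lincomb_in_span)

lemma span_dominant_lincomb_pmf:
  fixes cs :: "('a::{finite,field} ^ 'k) list"
  shows "span_dominant (lincomb_pmf cs)"
  unfolding span_dominant_def
proof
  fix S :: "('a ^ 'k) set"
  define q where "q = real CARD('a)"
  have "measure_pmf.prob (lincomb_pmf cs) (vec.span S)
     = E (replicate_pmf (length cs) (pmf_of_set UNIV)) (\<lambda>g. of_bool (0 + lincomb g cs \<in> vec.span S))"
    by (simp add: lincomb_pmf_def E_indicator[symmetric])
  also have "\<dots> = q ^ vec.dim S / q ^ vec.dim (S \<union> set cs)"
    unfolding E_lincomb_in_span q_def by (simp add: vec.span_zero)
  also have "\<dots> \<ge> q ^ vec.dim S / q ^ CARD('k)"
    using card_field_gt_1[where 'a='a] dim_le_card_index[of "S \<union> set cs"]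
    by (intro divide_left_mono power_increasing) (auto simp: q_def)
  finally show "measure_pmf.prob (pmf_of_set UNIV) (vec.span S) \<le> measure_pmf.prob (lincomb_pmf cs) (vec.span S)"
    by (simp add: measure_uniform_span q_def power_int_diff)
qed


section \<open>Growth of the rank under random vectors\<close>

lemma E_PP_insert:
  fixes S :: "('a::{finite,field} ^ 'k) set" and p :: "('a ^ 'k) pmf"
  defines "q \<equiv> real CARD('a)" and "b \<equiv> CARD('k) - vec.dim S"
  shows "E p (\<lambda>x. PP q N (CARD('k) - vec.dim (insert x S)))
    = PP q (Suc N) b + (measure_pmf.prob p (vec.span S) - measure_pmf.prob (pmf_of_set UNIV) (vec.span S))
        * (PP q N b - PP q N (b - 1))"
proof (cases "b = 0")
  case True
  then have "vec.dim S = CARD('k)" using dim_le_card_index[of S] by (simp add: b_def)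
  then show ?thesis using True by (simp add: dim_insert_full b_def)
next
  case False
  have q: "q \<noteq> 0" by (simp add: q_def)
  have "PP q N (CARD('k) - vec.dim (insert x S)) = PP q N (b - 1) + of_bool (x \<in> vec.span S) * (PP q N b - PP q N (b - 1))"
    for x using False by (auto simp: vec.dim_insert b_def)
  then have "E p (\<lambda>x. PP q N (CARD('k) - vec.dim (insert x S)))
      = PP q N (b - 1) + measure_pmf.prob p (vec.span S) * (PP q N b - PP q N (b - 1))"
    by (simp add: E_affine[where B=1] E_indicator)
  moreover have "measure_pmf.prob (pmf_of_set UNIV) (vec.span S) = q powi (- int b)"
    using dim_le_card_index[of S] by (simp add: measure_uniform_span q_def b_def)
  ultimately show ?thesis
    using PP_Suc_left[OF q, of b N] False by (simp add: algebra_simps)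
qed

lemma E_PP_insert_le:
  fixes S :: "('a::{finite,field} ^ 'k) set"
  assumes "span_dominant p"
  shows "E p (\<lambda>x. PP (real CARD('a)) N (CARD('k) - vec.dim (insert x S)))
    \<le> PP (real CARD('a)) (Suc N) (CARD('k) - vec.dim S)"
proof -
  have decr: "PP (real CARD('a)) N b - PP (real CARD('a)) N (b - 1) \<le> 0" for b
    using card_field_gt_1[where 'a='a] PP_Suc_right_le[of "real CARD('a)" N "b - 1"] by (cases b) auto
  have "0 \<le> measure_pmf.prob p (vec.span S) - measure_pmf.prob (pmf_of_set UNIV) (vec.span S)"
    using assms by (simp add: span_dominant_def)
  from mult_nonneg_nonpos[OF this decr[of "CARD('k) - vec.dim S"]] show ?thesis
    unfolding E_PP_insert by simp
qed

lemma E_PP_insert_uniform: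
  fixes S :: "('a::{finite,field} ^ 'k) set"
  shows "E (pmf_of_set UNIV) (\<lambda>x. PP (real CARD('a)) N (CARD('k) - vec.dim (insert x S)))
    = PP (real CARD('a)) (Suc N) (CARD('k) - vec.dim S)"
  unfolding E_PP_insert by simp

lemma E_PP_replicate_dominant_le:
  fixes S :: "('a::{finite,field} ^ 'k) set"
  assumes "span_dominant p"
  shows "E (replicate_pmf n p) (\<lambda>B. PP (real CARD('a)) N (CARD('k) - vec.dim (S \<union> set B)))
          \<le> PP (real CARD('a)) (N + n) (CARD('k) - vec.dim S)"
proof (induction n arbitrary: S)
  case (Suc n)
  have "E (replicate_pmf (Suc n) p) (\<lambda>B. PP (real CARD('a)) N (CARD('k) - vec.dim (S \<union> set B)))
     = E p (\<lambda>x. E (replicate_pmf n p) (\<lambda>B. PP (real CARD('a)) N (CARD('k) - vec.dim (insert x S \<union> set B))))"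
    by (subst E_replicate_pmf_Suc[where B=1]) (simp_all add: abs_PP_card_le_1)
  also have "\<dots> \<le> E p (\<lambda>x. PP (real CARD('a)) (N + n) (CARD('k) - vec.dim (insert x S)))"
    by (intro E_mono[where B=1] E_abs_le abs_PP_card_le_1 Suc.IH)
  also have "\<dots> \<le> PP (real CARD('a)) (N + Suc n) (CARD('k) - vec.dim S)"
    using E_PP_insert_le[OF assms] by simp
  finally show ?case .
qed simp

lemma E_PP_replicate_uniform:
  fixes S :: "('a::{finite,field} ^ 'k) set"
  shows "E (replicate_pmf n (pmf_of_set UNIV)) (\<lambda>B. PP (real CARD('a)) N (CARD('k) - vec.dim (S \<union> set B)))
          = PP (real CARD('a)) (N + n) (CARD('k) - vec.dim S)"
proof (induction n arbitrary: S)
  case (Suc n)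
  have "E (replicate_pmf (Suc n) (pmf_of_set UNIV)) (\<lambda>B. PP (real CARD('a)) N (CARD('k) - vec.dim (S \<union> set B)))
     = E (pmf_of_set UNIV) (\<lambda>x. E (replicate_pmf n (pmf_of_set UNIV))
         (\<lambda>B. PP (real CARD('a)) N (CARD('k) - vec.dim (insert x S \<union> set B))))"
    by (subst E_replicate_pmf_Suc[where B=1]) (simp_all add: abs_PP_card_le_1)
  also have "\<dots> = E (pmf_of_set UNIV) (\<lambda>x. PP (real CARD('a)) (N + n) (CARD('k) - vec.dim (insert x S)))"
    by (simp only: Suc.IH)
  finally show ?case
    by (simp add: E_PP_insert_uniform)
qed simp

lemma Pr_Suc_rows:
  assumes q: "q > 1"
  shows "Pr q r (Suc a) K = (\<Sum>d\<le>K. ((if d = r then q powi (int d - int K) else 0)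
            + (if Suc d = r then 1 - q powi (int d - int K) else 0)) * Pr q d a K)"
proof (cases r)
  case 0
  then have "(\<Sum>d\<le>K. ((if d = r then q powi (int d - int K) else 0)
            + (if Suc d = r then 1 - q powi (int d - int K) else 0)) * Pr q d a K)
      = (\<Sum>d\<le>K. if d = 0 then q powi (- int K) * Pr q 0 a K else 0)"
    by (intro sum.cong) auto
  then show ?thesis using q 0 by (simp add: Pr_0_Suc)
next
  case (Suc c)
  have if_0_mult: "(if P then x else 0) * y = (if P then x * y else 0)" for P and x y :: real
    by simp
  from Suc have "(\<Sum>d\<le>K. ((if d = r then q powi (int d - int K) else 0)
            + (if Suc d = r then 1 - q powi (int d - int K) else 0)) * Pr q d a K)
      = (if r \<le> K then q powi (int r - int K) * Pr q r a K else 0)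
        + (if c \<le> K then (1 - q powi (int c - int K)) * Pr q c a K else 0)"
    by (simp add: distrib_right sum.distrib if_0_mult sum.delta')
  also have "\<dots> = Pr q r (Suc a) K"
    using Pr_Suc_Suc[OF q, of c K a] Pr_eq_0_cols[of K r] Pr_eq_0_cols[of K c] Suc
    by (cases "c < K") (auto simp: not_less le_less)
  finally show ?thesis ..
qed

lemma E_dim_insert_uniform:
  fixes S :: "('a::{finite,field} ^ 'k) set"
  defines "q \<equiv> real CARD('a)"
  shows "E (pmf_of_set UNIV) (\<lambda>x. of_bool (vec.dim (insert x S) = r))
    = (if vec.dim S = r then q powi (int (vec.dim S) - int CARD('k)) else 0)
      + (if Suc (vec.dim S) = r then 1 - q powi (int (vec.dim S) - int CARD('k)) else 0)"
proof -
  have "E (pmf_of_set UNIV) (\<lambda>x. of_bool (vec.dim (insert x S) = r))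
      = E (pmf_of_set UNIV) (\<lambda>x. of_bool (Suc (vec.dim S) = r)
          + of_bool (x \<in> vec.span S) * (of_bool (vec.dim S = r) - of_bool (Suc (vec.dim S) = r)))"
    by (rule E_cong) (auto simp: vec.dim_insert)
  also have "\<dots> = of_bool (Suc (vec.dim S) = r)
      + measure_pmf.prob (pmf_of_set UNIV) (vec.span S) * (of_bool (vec.dim S = r) - of_bool (Suc (vec.dim S) = r))"
    by (subst E_affine[where B=1]) (simp_all add: E_indicator)
  finally show ?thesis
    by (auto simp: measure_uniform_span q_def)
qed

lemma pmf_rank_replicate_uniform:
  "pmf (map_pmf (\<lambda>A. vec.dim (set A)) (replicate_pmf a (pmf_of_set (UNIV :: ('a::{finite,field} ^ 'k) set)))) r
    = Pr (real CARD('a)) r a CARD('k)"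
proof (induction a arbitrary: r)
  case 0
  then show ?case by (simp add: Pr_0_rows indicator_def)
next
  case (Suc a)
  define U where "U = pmf_of_set (UNIV :: ('a ^ 'k) set)"
  define f where "f d = (if d = r then real CARD('a) powi (int d - int CARD('k)) else 0)
            + (if Suc d = r then 1 - real CARD('a) powi (int d - int CARD('k)) else 0)" for d
  have "pmf (map_pmf (\<lambda>A. vec.dim (set A)) (replicate_pmf (Suc a) U)) r
      = E U (\<lambda>x. E (replicate_pmf a U) (\<lambda>A. of_bool (vec.dim (insert x (set A)) = r)))"
    by (simp add: pmf_map_pmf_eq_E E_replicate_pmf_Suc[where B=1] del: replicate_pmf.simps)
  also have "\<dots> = E (replicate_pmf a U) (\<lambda>A. f (vec.dim (set A)))"
    unfolding f_def U_def E_dim_insert_uniform[symmetric] by (rule E_commute[where B=1]) simp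
  also have "\<dots> = E (map_pmf (\<lambda>A. vec.dim (set A)) (replicate_pmf a U)) f"
    by simp
  also have "\<dots> = (\<Sum>d\<le>CARD('k). f d * Pr (real CARD('a)) d a CARD('k))"
    by (subst integral_measure_pmf_real[where A="{..CARD('k)}"])
       (auto simp: dim_le_card_index U_def Suc.IH)
  also have "\<dots> = Pr (real CARD('a)) r (Suc a) CARD('k)"
    unfolding f_def by (rule Pr_Suc_rows[OF card_field_gt_1, symmetric])
  finally show ?case unfolding U_def .
qed

lemma P2_eq_E_rank:
  fixes K :: nat and q :: real
  defines "K \<equiv> CARD('k)" and "q \<equiv> real CARD('a::{finite,field})"
  shows "P2 q (m1 + m12) (m2 + m12) m12 K
     = E (replicate_pmf m12 (pmf_of_set (UNIV :: ('a ^ 'k) set)))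
         (\<lambda>A. PP q m1 (K - vec.dim (set A)) * PP q m2 (K - vec.dim (set A)))"
proof -
  define I where "I = {i::nat. int K - int (m1 + m12) + int m12 \<le> int i
                        \<and> int K - int (m2 + m12) + int m12 \<le> int i \<and> i \<le> min m12 K}"
  have "P2 q (m1 + m12) (m2 + m12) m12 K = (\<Sum>i\<in>I. Pr q i m12 K * PP q m1 (K - i) * PP q m2 (K - i))"
    unfolding P2_def I_def by simp
  also have "\<dots> = (\<Sum>d\<le>K. PP q m1 (K - d) * PP q m2 (K - d) * Pr q d m12 K)"
  proof (rule sum.mono_neutral_cong_left)
    show "\<forall>i\<in>{..K} - I. PP q m1 (K - i) * PP q m2 (K - i) * Pr q i m12 K = 0"
    proof
      fix i assume "i \<in> {..K} - I"
      then have "m12 < i \<or> m1 < K - i \<or> m2 < K - i" by (auto simp: I_def)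
      then show "PP q m1 (K - i) * PP q m2 (K - i) * Pr q i m12 K = 0"
        by (auto simp: PP_eq_0 Pr_eq_0_rows)
    qed
  qed (auto simp: I_def)
  also have "\<dots> = E (map_pmf (\<lambda>A. vec.dim (set A)) (replicate_pmf m12 (pmf_of_set (UNIV :: ('a ^ 'k) set))))
                   (\<lambda>d. PP q m1 (K - d) * PP q m2 (K - d))"
    by (subst integral_measure_pmf_real[where A="{..K}"])
       (auto simp: dim_le_card_index K_def q_def pmf_rank_replicate_uniform)
  finally show ?thesis by simp
qed

lemma abs_P2_le_1: "\<bar>P2 (real CARD('a::{finite,field})) (m1 + m12) (m2 + m12) m12 CARD('k::finite)\<bar> \<le> 1"
  unfolding P2_eq_E_rank[where 'a='a and 'k='k]
  by (intro E_abs_le) (simp add: abs_mult mult_le_one abs_PP_card_le_1)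

lemma P2_eq_0:
  assumes "min m1 m2 < K" "m12 \<le> m1" "m12 \<le> m2"
  shows "P2 q m1 m2 m12 K = 0"
proof -
  have "{i::nat. int K - int m1 + int m12 \<le> int i \<and> int K - int m2 + int m12 \<le> int i \<and> i \<le> min m12 K} = {}"
    using assms by auto
  then show ?thesis unfolding P2_def by (simp only: sum.empty)
qed


section \<open>Erasure patterns\<close>

abbreviation ntrue :: "bool list \<Rightarrow> nat" where
  "ntrue fl \<equiv> length (filter id fl)"

lemma received_Nil [simp]: "received [] fl = []"
  by (simp add: received_def)

lemma received_Cons [simp]:
  "received (x # xs) (f # fs) = (if f then x # received xs fs else received xs fs)"
  unfolding received_def length_Cons upt_conv_Cons[OF zero_less_Suc] map_Suc_upt[symmetric]
  by (simp add: comp_def cong: if_cong)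

lemma set_received: "set (received xs fl) = {xs ! i | i. i < length xs \<and> fl ! i}"
  unfolding received_def by auto

lemma received_map: "received (map f xs) fl = map f (received xs fl)"
  unfolding received_def by (auto simp: map_concat intro!: arg_cong[where f=concat] map_cong)

lemma ntrue_received_add_ntrue_received_Not:
  "length xs = length fl \<Longrightarrow> ntrue (received xs fl) + ntrue (received xs (map Not fl)) = ntrue xs"
  by (induction xs fl rule: list_induct2) auto

lemma length_filter_Not: "length (filter Not fl) = length fl - ntrue fl"
  by (induction fl) (auto simp: Suc_diff_le)

lemma map_received_replicate_pmf:
  "map_pmf (\<lambda>xs. received xs fl) (replicate_pmf (length fl) p) = replicate_pmf (ntrue fl) p"
proof (induction fl)
  case (Cons f fs)
  have "map_pmf (\<lambda>xs. received xs (f # fs)) (replicate_pmf (length (f # fs)) p)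
      = p \<bind> (\<lambda>x. map_pmf (\<lambda>ys. if f then x # ys else ys)
          (map_pmf (\<lambda>xs. received xs fs) (replicate_pmf (length fs) p)))"
    by (simp add: map_bind_pmf map_pmf_def bind_assoc_pmf bind_return_pmf)
  then show ?case
    unfolding Cons.IH by (simp add: map_pmf_def bind_return_pmf' id_def)
qed simp

lemma map_received_pair_replicate_pmf:
  assumes "length f1 = length f2" "\<forall>i<length f1. \<not> (f1 ! i \<and> f2 ! i)"
  shows "map_pmf (\<lambda>xs. (received xs f1, received xs f2)) (replicate_pmf (length f1) p)
          = pair_pmf (replicate_pmf (ntrue f1) p) (replicate_pmf (ntrue f2) p)"
  using assms
proof (induction f1 f2 rule: list_induct2)
  case Nil
  then show ?case by (simp add: pair_return_pmf1)
next
  case (Cons a f1 b f2)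
  have IH: "map_pmf (\<lambda>xs. (received xs f1, received xs f2)) (replicate_pmf (length f1) p)
          = pair_pmf (replicate_pmf (ntrue f1) p) (replicate_pmf (ntrue f2) p)"
    using Cons.prems by (intro Cons.IH) auto
  have "map_pmf (\<lambda>xs. (received xs (a # f1), received xs (b # f2))) (replicate_pmf (length (a # f1)) p)
     = p \<bind> (\<lambda>x. map_pmf (\<lambda>(u, v). (if a then x # u else u, if b then x # v else v))
          (pair_pmf (replicate_pmf (ntrue f1) p) (replicate_pmf (ntrue f2) p)))"
    unfolding IH[symmetric] by (simp add: map_bind_pmf map_pmf_def bind_assoc_pmf bind_return_pmf)
  also have "\<dots> = pair_pmf (replicate_pmf (ntrue (a # f1)) p) (replicate_pmf (ntrue (b # f2)) p)"
  proof -
    have "\<not> (a \<and> b)" using Cons.prems by auto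
    then consider "a" "\<not> b" | "\<not> a" "b" | "\<not> a" "\<not> b" by blast
    then show ?thesis
    proof cases
      case 2
      then show ?thesis
        by (simp add: pair_pmf_def map_bind_pmf map_pmf_def bind_assoc_pmf bind_return_pmf)
           (subst bind_commute_pmf, simp)
    qed (simp_all add: pair_pmf_def map_bind_pmf map_pmf_def bind_assoc_pmf bind_return_pmf bind_pmf_const)
  qed
  finally show ?case .
qed


section \<open>Relays are no better than fresh uniform packets\<close>

definition relay_erasure_pmf :: "nat \<Rightarrow> nat \<Rightarrow> real \<Rightarrow> real \<Rightarrow> (bool list \<times> bool list) pmf" where
  "relay_erasure_pmf NS NR eSR eRD =
     pair_pmf (replicate_pmf NS (bernoulli_pmf (1 - eSR))) (replicate_pmf NR (bernoulli_pmf (1 - eRD)))"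

lemma relay_pmf_eq:
  "relay_pmf NS NR eSR eRD C = relay_erasure_pmf NS NR eSR eRD
     \<bind> (\<lambda>(sr, rd). replicate_pmf (ntrue rd) (lincomb_pmf (received C sr)))"
proof -
  define coeffs where "coeffs Cj = replicate_pmf NR (replicate_pmf (length Cj) (pmf_of_set (UNIV :: 'a set)))"
    for Cj :: "('a ^ 'b) list"
  have "coeffs Cj \<bind> (\<lambda>G. return_pmf (received (mat_mult_rows G Cj) rd))
      = map_pmf (map (\<lambda>g. lincomb g Cj)) (map_pmf (\<lambda>G. received G rd) (coeffs Cj))" for Cj rd
    by (simp add: map_pmf_def[symmetric] mat_mult_rows_eq_map_lincomb received_map pmf.map_comp o_def)
  also have "\<dots> Cj rd = replicate_pmf (ntrue rd) (lincomb_pmf Cj)" if "length rd = NR" for Cj rd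
    using that by (simp add: coeffs_def map_received_replicate_pmf[of rd, simplified that]
                    map_replicate_pmf lincomb_pmf_def)
  finally show ?thesis
    unfolding relay_pmf_def relay_erasure_pmf_def pair_pmf_def Let_def coeffs_def
    by (simp add: bind_assoc_pmf bind_return_pmf)
       (intro bind_pmf_cong refl, subst bind_commute_pmf, intro bind_pmf_cong refl,
        auto simp: set_replicate_pmf)
qed

lemma abs_PP_mult_of_bool_le_1: "\<bar>PP (real CARD('a::{finite,field})) n b * of_bool P\<bar> \<le> 1"
  using abs_PP_card_le_1[where 'a='a, of n b] by (cases P) auto

lemma E_relay_pmf_le:
  fixes C :: "('a::{finite,field} ^ 'k) list" and S T :: "('a ^ 'k) set"
  defines "q \<equiv> real CARD('a)" and "K \<equiv> CARD('k)"
  shows "E (relay_pmf NS NR eSR eRD C)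
           (\<lambda>X. PP q n (K - vec.dim (S \<union> set X)) * of_bool (vec.span (T \<union> set X) = UNIV))
    \<le> E (relay_erasure_pmf NS NR eSR eRD)
           (\<lambda>(sr, rd). PP q (n + ntrue rd) (K - vec.dim S)
              * of_bool (vec.span (T \<union> set (received C sr)) = UNIV))"
proof -
  have bounded: "\<bar>PP q m b * of_bool P\<bar> \<le> 1" for m b P
    unfolding q_def by (rule abs_PP_mult_of_bool_le_1)
  have "E (replicate_pmf m (lincomb_pmf Cj))
           (\<lambda>X. PP q n (K - vec.dim (S \<union> set X)) * of_bool (vec.span (T \<union> set X) = UNIV))
     \<le> PP q (n + m) (K - vec.dim S) * of_bool (vec.span (T \<union> set Cj) = UNIV)"
    for m and Cj :: "('a ^ 'k) list"
  proof -
    have "E (replicate_pmf m (lincomb_pmf Cj))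
           (\<lambda>X. PP q n (K - vec.dim (S \<union> set X)) * of_bool (vec.span (T \<union> set X) = UNIV))
      \<le> E (replicate_pmf m (lincomb_pmf Cj))
           (\<lambda>X. PP q n (K - vec.dim (S \<union> set X)) * of_bool (vec.span (T \<union> set Cj) = UNIV))"
    proof (rule E_mono[OF bounded bounded])
      fix X assume "X \<in> set_pmf (replicate_pmf m (lincomb_pmf Cj))"
      then have "set X \<subseteq> vec.span (set Cj)"
        using set_lincomb_pmf by (fastforce simp: set_replicate_pmf)
      then have "T \<union> set X \<subseteq> vec.span (T \<union> set Cj)"
        using vec.span_superset vec.span_mono[of "set Cj" "T \<union> set Cj"] by blast
      then have "vec.span (T \<union> set X) \<subseteq> vec.span (T \<union> set Cj)"
        by (rule vec.span_minimal[OF _ vec.subspace_span])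
      then show "PP q n (K - vec.dim (S \<union> set X)) * of_bool (vec.span (T \<union> set X) = UNIV)
          \<le> PP q n (K - vec.dim (S \<union> set X)) * of_bool (vec.span (T \<union> set Cj) = UNIV)"
        using PP_nonneg[of q n] by (auto simp: q_def)
    qed
    also have "\<dots> \<le> PP q (n + m) (K - vec.dim S) * of_bool (vec.span (T \<union> set Cj) = UNIV)"
      using E_PP_replicate_dominant_le[OF span_dominant_lincomb_pmf, where n=m and N=n and S=S]
      by (simp add: q_def K_def)
    finally show ?thesis .
  qed
  then show ?thesis
    unfolding relay_pmf_eq
    by (subst E_bind[OF bounded], intro E_mono[where B=1]) (auto simp: E_abs_le bounded)
qed

lemma E_relays_le:
  fixes C :: "('a::{finite,field} ^ 'k) list" and S T :: "('a ^ 'k) set"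
  shows "E (seq_pmf (map (\<lambda>j. relay_pmf NS NR (eSR j) (eRD j) C) js))
     (\<lambda>outs. PP (real CARD('a)) N (CARD('k) - vec.dim (S \<union> set (concat outs)))
         * of_bool (vec.span (T \<union> set (concat outs)) = UNIV))
   \<le> E (seq_pmf (map (\<lambda>j. relay_erasure_pmf NS NR (eSR j) (eRD j)) js))
     (\<lambda>ps. PP (real CARD('a)) (N + (\<Sum>p\<leftarrow>ps. ntrue (snd p))) (CARD('k) - vec.dim S)
         * of_bool (vec.span (T \<union> (\<Union>p\<in>set ps. set (received C (fst p)))) = UNIV))"
proof (induction js arbitrary: S T N)
  case (Cons j js)
  define q where "q = real CARD('a)"
  define K where "K = CARD('k)"
  define relay where "relay = relay_pmf NS NR (eSR j) (eRD j) C"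
  define relays where "relays = seq_pmf (map (\<lambda>j. relay_pmf NS NR (eSR j) (eRD j) C) js)"
  define erasure where "erasure = relay_erasure_pmf NS NR (eSR j) (eRD j)"
  define erasures where "erasures = seq_pmf (map (\<lambda>j. relay_erasure_pmf NS NR (eSR j) (eRD j)) js)"
  define n where "n ps = N + (\<Sum>p\<leftarrow>ps. ntrue (snd p))" for ps :: "(bool list \<times> bool list) list"
  define R where "R ps = (\<Union>p\<in>set ps. set (received C (fst p)))" for ps :: "(bool list \<times> bool list) list"
  have bounded: "\<bar>PP q m b * of_bool P\<bar> \<le> 1" for m b P
    unfolding q_def by (rule abs_PP_mult_of_bool_le_1)
  have "E relay (\<lambda>X. E relays (\<lambda>outs. PP q N (K - vec.dim ((S \<union> set X) \<union> set (concat outs)))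
            * of_bool (vec.span ((T \<union> set X) \<union> set (concat outs)) = UNIV)))
     \<le> E relay (\<lambda>X. E erasures (\<lambda>ps. PP q (n ps) (K - vec.dim (S \<union> set X))
            * of_bool (vec.span ((T \<union> set X) \<union> R ps) = UNIV)))"
    unfolding relays_def erasures_def n_def R_def q_def K_def
    by (intro E_mono[where B=1] E_abs_le abs_PP_mult_of_bool_le_1 Cons.IH)
  also have "\<dots> = E erasures (\<lambda>ps. E relay (\<lambda>X. PP q (n ps) (K - vec.dim (S \<union> set X))
            * of_bool (vec.span ((T \<union> R ps) \<union> set X) = UNIV)))"
    by (subst E_commute[where B=1]) (simp_all add: bounded Un_ac)
  also have "\<dots> \<le> E erasures (\<lambda>ps. E erasure (\<lambda>(sr, rd). PP q (n ps + ntrue rd) (K - vec.dim S)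
            * of_bool (vec.span ((T \<union> R ps) \<union> set (received C sr)) = UNIV)))"
    unfolding relay_def erasure_def q_def K_def
    by (intro E_mono[where B=1] E_abs_le abs_PP_mult_of_bool_le_1 E_relay_pmf_le)
       (simp_all add: case_prod_beta abs_PP_mult_of_bool_le_1)
  also have "\<dots> = E erasure (\<lambda>p. E erasures (\<lambda>ps. PP q (n (p # ps)) (K - vec.dim S)
            * of_bool (vec.span (T \<union> R (p # ps)) = UNIV)))"
    by (subst E_commute[where B=1])
       (simp_all add: case_prod_beta bounded n_def R_def Un_ac add_ac)
  finally show ?case
    unfolding relay_def relays_def erasure_def erasures_def n_def R_def q_def K_def list.map
    by (subst (1 2) E_seq_pmf_Cons[where B=1]) (simp_all add: abs_PP_mult_of_bool_le_1 Un_assoc)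
qed simp


section \<open>Reduction to erasure patterns\<close>

(* For the patterns sd of S -> D and ps of the relays, with R = relays_received NS ps, the paper's
   m, m_D and m - m_RD are ntrue R, ntrue sd and ntrue (relay_only sd R). *)
definition relays_received :: "nat \<Rightarrow> (bool list \<times> bool list) list \<Rightarrow> bool list" where
  "relays_received NS ps = map (\<lambda>i. \<exists>p\<in>set ps. fst p ! i) [0..<NS]"

definition relay_only :: "bool list \<Rightarrow> bool list \<Rightarrow> bool list" where
  "relay_only sd R = map2 (\<lambda>d r. \<not> d \<and> r) sd R"

lemma length_relays_received [simp]: "length (relays_received NS ps) = NS"
  by (simp add: relays_received_def)

lemma relays_received_Nil: "relays_received NS [] = replicate NS False"
  by (simp add: relays_received_def map_replicate_const)

lemma relays_received_Cons:
  "length (fst p) = NS \<Longrightarrow> relays_received NS (p # ps) = map2 (\<or>) (fst p) (relays_received NS ps)"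
  unfolding relays_received_def by (auto simp: list_eq_iff_nth_eq)

lemma nth_relay_only: "length sd = length R \<Longrightarrow> i < length sd \<Longrightarrow> relay_only sd R ! i = (\<not> sd ! i \<and> R ! i)"
  by (simp add: relay_only_def)

lemma length_relay_only [simp]: "length (relay_only sd R) = min (length sd) (length R)"
  by (simp add: relay_only_def)

lemma set_received_Un_relays:
  assumes "length C = NS" "length sd = NS"
  shows "set (received C sd) \<union> (\<Union>p\<in>set ps. set (received C (fst p)))
       = set (received C sd) \<union> set (received C (relay_only sd (relays_received NS ps)))"
    (is "?lhs = ?rhs")
proof (intro equalityI subsetI)
  fix x assume "x \<in> ?lhs"
  then show "x \<in> ?rhs"
  proof (elim UnE UN_E)
    fix p assume p: "p \<in> set ps" "x \<in> set (received C (fst p))"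
    then obtain i where i: "i < NS" "fst p ! i" "x = C ! i"
      using assms by (auto simp: set_received)
    show "x \<in> ?rhs"
    proof (cases "sd ! i")
      case True
      then have "x \<in> set (received C sd)" unfolding set_received using i assms by blast
      then show ?thesis by blast
    next
      case False
      then have "relay_only sd (relays_received NS ps) ! i"
        using i p assms by (auto simp: nth_relay_only relays_received_def)
      then have "x \<in> set (received C (relay_only sd (relays_received NS ps)))"
        unfolding set_received using i assms by auto
      then show ?thesis by blast
    qed
  qed simp
next
  fix x assume "x \<in> ?rhs"
  then show "x \<in> ?lhs"
    using assms by (auto simp: set_received nth_relay_only relays_received_def)
qed

lemma of_bool_span_eq_UNIV:
  "of_bool (vec.span S = UNIV) = PP (real CARD('a)) 0 (CARD('k) - vec.dim (S :: ('a::{finite,field} ^ 'k) set))"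
  using dim_le_card_index[of S] dim_eq_card_index_iff[of S]
  by (cases "vec.span S = UNIV") (auto simp: PP_0_left)

lemma E_uniform_received_disjoint:
  fixes q :: real and K :: nat
  defines "q \<equiv> real CARD('a::{finite,field})" and "K \<equiv> CARD('k)"
  assumes len: "length sd = NS" "length R = NS" and disj: "\<forall>i<NS. \<not> (sd ! i \<and> R ! i)"
  shows "E (replicate_pmf NS (pmf_of_set (UNIV :: ('a ^ 'k) set)))
      (\<lambda>C. PP q m (K - vec.dim (set (received C sd)))
         * of_bool (vec.span (set (received C sd) \<union> set (received C R)) = UNIV))
    = P2 q (m + ntrue sd) (ntrue R + ntrue sd) (ntrue sd) K"
proof -
  define U where "U = pmf_of_set (UNIV :: ('a ^ 'k) set)"
  define F where "F A B = PP q m (K - vec.dim (set A)) * of_bool (vec.span (set A \<union> set B) = UNIV)"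
    for A B :: "('a ^ 'k) list"
  have bounded: "\<bar>F A B\<bar> \<le> 1" for A B
    unfolding F_def q_def by (rule abs_PP_mult_of_bool_le_1)
  have "E (replicate_pmf NS U) (\<lambda>C. F (received C sd) (received C R))
      = E (map_pmf (\<lambda>C. (received C sd, received C R)) (replicate_pmf (length sd) U)) (case_prod F)"
    using len by simp
  also have "\<dots> = E (pair_pmf (replicate_pmf (ntrue sd) U) (replicate_pmf (ntrue R) U)) (case_prod F)"
    using len disj by (subst map_received_pair_replicate_pmf) auto
  also have "\<dots> = E (replicate_pmf (ntrue sd) U) (\<lambda>A. E (replicate_pmf (ntrue R) U) (F A))"
    by (simp add: E_pair_pmf[where B=1] bounded split_beta)
  also have "\<dots> = E (replicate_pmf (ntrue sd) U)
                   (\<lambda>A. PP q m (K - vec.dim (set A)) * PP q (ntrue R) (K - vec.dim (set A)))"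
    unfolding F_def of_bool_span_eq_UNIV U_def q_def K_def
    by (simp add: E_PP_replicate_uniform)
  finally show ?thesis
    unfolding F_def U_def q_def K_def P2_eq_E_rank by simp
qed

lemma E_uniform_received_relays:
  fixes q :: real and K :: nat
  defines "q \<equiv> real CARD('a::{finite,field})" and "K \<equiv> CARD('k)"
  assumes len: "length sd = NS"
  shows "E (replicate_pmf NS (pmf_of_set (UNIV :: ('a ^ 'k) set)))
      (\<lambda>C. PP q m (K - vec.dim (set (received C sd)))
         * of_bool (vec.span (set (received C sd) \<union> (\<Union>p\<in>set ps. set (received C (fst p)))) = UNIV))
    = P2 q (m + ntrue sd) (ntrue (relay_only sd (relays_received NS ps)) + ntrue sd) (ntrue sd) K"
proof -
  have "E (replicate_pmf NS (pmf_of_set (UNIV :: ('a ^ 'k) set)))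
      (\<lambda>C. PP q m (K - vec.dim (set (received C sd)))
         * of_bool (vec.span (set (received C sd) \<union> (\<Union>p\<in>set ps. set (received C (fst p)))) = UNIV))
    = E (replicate_pmf NS (pmf_of_set (UNIV :: ('a ^ 'k) set)))
      (\<lambda>C. PP q m (K - vec.dim (set (received C sd)))
         * of_bool (vec.span (set (received C sd) \<union> set (received C (relay_only sd (relays_received NS ps)))) = UNIV))"
    by (intro E_cong) (simp add: len set_received_Un_relays set_replicate_pmf)
  also have "\<dots> = P2 q (m + ntrue sd) (ntrue (relay_only sd (relays_received NS ps)) + ntrue sd) (ntrue sd) K"
    unfolding q_def K_def by (rule E_uniform_received_disjoint) (simp_all add: len nth_relay_only)
  finally show ?thesis .
qed

lemma success_prob_eq_E:
  fixes T :: "('a::{finite,field} ^ 'k) itself"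
  shows "success_prob L NS NR eSD eSR eRD T =
     E (replicate_pmf NS (pmf_of_set (UNIV :: ('a ^ 'k) set))) (\<lambda>C.
       E (replicate_pmf NS (bernoulli_pmf (1 - eSD))) (\<lambda>sd.
         E (seq_pmf (map (\<lambda>j. relay_pmf NS NR (eSR j) (eRD j) C) [0..<L])) (\<lambda>outs.
           of_bool (vec.span (set (received C sd) \<union> set (concat outs)) = UNIV))))"
  unfolding success_prob_def network_pmf_def
  by (simp add: pmf_bind Let_def row_list_rank_def indicator_def dim_eq_card_index_iff)

lemma E_relays_span_le:
  fixes C :: "('a::{finite,field} ^ 'k) list" and S :: "('a ^ 'k) set"
  shows "E (seq_pmf (map (\<lambda>j. relay_pmf NS NR (eSR j) (eRD j) C) js))
      (\<lambda>outs. of_bool (vec.span (S \<union> set (concat outs)) = UNIV))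
    \<le> E (seq_pmf (map (\<lambda>j. relay_erasure_pmf NS NR (eSR j) (eRD j)) js))
      (\<lambda>ps. PP (real CARD('a)) (\<Sum>p\<leftarrow>ps. ntrue (snd p)) (CARD('k) - vec.dim S)
         * of_bool (vec.span (S \<union> (\<Union>p\<in>set ps. set (received C (fst p)))) = UNIV))"
proof -
  have full: "PP (real CARD('a)) 0 (CARD('k) - vec.dim X) * of_bool (vec.span X = UNIV)
      = of_bool (vec.span X = UNIV)" for X :: "('a ^ 'k) set"
    by (simp add: of_bool_span_eq_UNIV[symmetric])
  from E_relays_le[where N=0 and S=S and T=S and C=C, unfolded full] show ?thesis
    by simp
qed

lemma success_prob_le:
  fixes T :: "('a::{finite,field} ^ 'k) itself"
  defines "q \<equiv> real CARD('a)" and "K \<equiv> CARD('k)"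
  shows "success_prob L NS NR eSD eSR eRD T \<le>
    E (replicate_pmf NS (bernoulli_pmf (1 - eSD))) (\<lambda>sd.
      E (seq_pmf (map (\<lambda>j. relay_erasure_pmf NS NR (eSR j) (eRD j)) [0..<L])) (\<lambda>ps.
        P2 q ((\<Sum>p\<leftarrow>ps. ntrue (snd p)) + ntrue sd)
             (ntrue (relay_only sd (relays_received NS ps)) + ntrue sd) (ntrue sd) K))"
proof -
  define U where "U = pmf_of_set (UNIV :: ('a ^ 'k) set)"
  define SD where "SD = replicate_pmf NS (bernoulli_pmf (1 - eSD))"
  define erasures where "erasures = seq_pmf (map (\<lambda>j. relay_erasure_pmf NS NR (eSR j) (eRD j)) [0..<L])"
  define f where "f C sd ps = PP q (\<Sum>p\<leftarrow>ps. ntrue (snd p)) (K - vec.dim (set (received C sd)))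
         * of_bool (vec.span (set (received C sd) \<union> (\<Union>p\<in>set ps. set (received C (fst p)))) = UNIV)"
    for C :: "('a ^ 'k) list" and sd ps
  have bounded: "\<bar>f C sd ps\<bar> \<le> 1" for C sd ps
    unfolding f_def q_def by (rule abs_PP_mult_of_bool_le_1)
  have "success_prob L NS NR eSD eSR eRD T \<le> E (replicate_pmf NS U) (\<lambda>C. E SD (\<lambda>sd. E erasures (f C sd)))"
    unfolding success_prob_eq_E U_def SD_def erasures_def f_def q_def K_def
    by (intro E_mono[where B=1] E_relays_span_le E_abs_le abs_PP_mult_of_bool_le_1) simp_all
  also have "\<dots> = E SD (\<lambda>sd. E erasures (\<lambda>ps. E (replicate_pmf NS U) (\<lambda>C. f C sd ps)))"
    by (subst E_commute[where B=1], rule E_abs_le, rule bounded, rule E_cong)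
       (subst E_commute[where B=1], auto simp: bounded)
  also have "\<dots> = E SD (\<lambda>sd. E erasures (\<lambda>ps.
        P2 q ((\<Sum>p\<leftarrow>ps. ntrue (snd p)) + ntrue sd)
             (ntrue (relay_only sd (relays_received NS ps)) + ntrue sd) (ntrue sd) K))"
    unfolding f_def U_def q_def K_def
    by (intro E_cong E_uniform_received_relays) (simp add: SD_def set_replicate_pmf)
  finally show ?thesis unfolding SD_def erasures_def .
qed


section \<open>Distribution of the erasure counts\<close>

lemma E_ntrue_replicate_bernoulli:
  assumes "0 \<le> e" "e \<le> 1"
  shows "E (replicate_pmf n (bernoulli_pmf (1 - e))) (\<lambda>fl. g (ntrue fl)) = (\<Sum>k\<le>n. Bin k n e * g k)"
proof -
  have p: "1 - e \<in> {0..1}" using assms by auto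
  have "E (replicate_pmf n (bernoulli_pmf (1 - e))) (\<lambda>fl. g (ntrue fl)) = E (binomial_pmf n (1 - e)) g"
    unfolding binomial_pmf_altdef[OF p] by simp
  also have "\<dots> = (\<Sum>k\<le>n. g k * pmf (binomial_pmf n (1 - e)) k)"
    by (rule integral_measure_pmf_real) (use p in \<open>auto simp: set_pmf_binomial_eq split: if_splits\<close>)
  finally show ?thesis
    using p by (simp add: Bin_def mult.commute)
qed

lemma E_bernoulli_or:
  assumes "0 \<le> x" "x \<le> 1" "0 \<le> y" "y \<le> 1"
  shows "E (bernoulli_pmf x) (\<lambda>a. E (bernoulli_pmf y) (\<lambda>b. h (a \<or> b)))
       = E (bernoulli_pmf (1 - (1 - x) * (1 - y))) h"
proof -
  have "0 \<le> (1 - x) * (1 - y)" "(1 - x) * (1 - y) \<le> 1"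
    using assms by (auto intro: mult_le_one)
  then show ?thesis using assms by (simp add: algebra_simps)
qed

lemma E_replicate_bernoulli_map2_or:
  assumes "0 \<le> x" "x \<le> 1" "0 \<le> y" "y \<le> 1" and G: "\<And>c. \<bar>G c\<bar> \<le> B"
  shows "E (replicate_pmf n (bernoulli_pmf x)) (\<lambda>a. E (replicate_pmf n (bernoulli_pmf y)) (\<lambda>b. G (map2 (\<or>) a b)))
       = E (replicate_pmf n (bernoulli_pmf (1 - (1 - x) * (1 - y)))) G"
  using G
proof (induction n arbitrary: G)
  case (Suc n)
  define xy where "xy = 1 - (1 - x) * (1 - y)"
  have "E (replicate_pmf (Suc n) (bernoulli_pmf x))
          (\<lambda>a. E (replicate_pmf (Suc n) (bernoulli_pmf y)) (\<lambda>b. G (map2 (\<or>) a b)))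
      = E (bernoulli_pmf x) (\<lambda>a0. E (bernoulli_pmf y) (\<lambda>b0.
          E (replicate_pmf n (bernoulli_pmf x)) (\<lambda>as. E (replicate_pmf n (bernoulli_pmf y))
            (\<lambda>bs. G ((a0 \<or> b0) # map2 (\<or>) as bs)))))"
  proof -
    have "E (replicate_pmf (Suc n) (bernoulli_pmf x))
            (\<lambda>a. E (replicate_pmf (Suc n) (bernoulli_pmf y)) (\<lambda>b. G (map2 (\<or>) a b)))
        = E (bernoulli_pmf x) (\<lambda>a0. E (replicate_pmf n (bernoulli_pmf x)) (\<lambda>as.
            E (bernoulli_pmf y) (\<lambda>b0. E (replicate_pmf n (bernoulli_pmf y))
              (\<lambda>bs. G ((a0 \<or> b0) # map2 (\<or>) as bs)))))"
      by (simp del: replicate_pmf.simps add: E_replicate_pmf_Suc[where B=B] E_abs_le Suc.prems)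
    then show ?thesis
      by (simp add: E_commute[where B=B and p="replicate_pmf n (bernoulli_pmf x)" and q="bernoulli_pmf y"] E_abs_le Suc.prems)
  qed
  also have "\<dots> = E (bernoulli_pmf x) (\<lambda>a0. E (bernoulli_pmf y) (\<lambda>b0.
          E (replicate_pmf n (bernoulli_pmf xy)) (\<lambda>cs. G ((a0 \<or> b0) # cs))))"
    unfolding xy_def by (subst Suc.IH) (auto intro: Suc.prems)
  also have "\<dots> = E (bernoulli_pmf xy) (\<lambda>c0. E (replicate_pmf n (bernoulli_pmf xy)) (\<lambda>cs. G (c0 # cs)))"
    unfolding xy_def by (rule E_bernoulli_or[OF assms(1-4)])
  also have "\<dots> = E (replicate_pmf (Suc n) (bernoulli_pmf xy)) G"
    by (simp del: replicate_pmf.simps add: E_replicate_pmf_Suc[where B=B] E_abs_le Suc.prems)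
  finally show ?case unfolding xy_def .
qed simp

lemma E_relays_received:
  assumes eSR: "\<forall>j\<in>set js. 0 \<le> eSR j \<and> eSR j \<le> 1" and H: "\<And>R m. \<bar>H R m\<bar> \<le> B"
  shows "E (seq_pmf (map (\<lambda>j. relay_erasure_pmf NS NR (eSR j) (eRD j)) js))
           (\<lambda>ps. H (relays_received NS ps) (\<Sum>p\<leftarrow>ps. ntrue (snd p)))
       = E (replicate_pmf NS (bernoulli_pmf (1 - (\<Prod>j\<leftarrow>js. eSR j))))
           (\<lambda>R. E (seq_pmf (map (\<lambda>j. replicate_pmf NR (bernoulli_pmf (1 - eRD j))) js))
             (\<lambda>rds. H R (\<Sum>rd\<leftarrow>rds. ntrue rd)))"
  using assms
proof (induction js arbitrary: H)
  case Nil
  then show ?case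
    by (simp add: relays_received_Nil bernoulli_pmf_0 replicate_pmf_return_pmf)
next
  case (Cons j js)
  note bounded = Cons.prems(2) E_abs_le[OF Cons.prems(2)]
  define SR where "SR = replicate_pmf NS (bernoulli_pmf (1 - eSR j))"
  define RD where "RD = replicate_pmf NR (bernoulli_pmf (1 - eRD j))"
  define RDS where "RDS = seq_pmf (map (\<lambda>j. replicate_pmf NR (bernoulli_pmf (1 - eRD j))) js)"
  define e where "e = (\<Prod>j\<leftarrow>js. eSR j)"
  have e: "0 \<le> e" "e \<le> 1"
    unfolding e_def using Cons.prems(1) by (induction js) (auto intro: mult_le_one)
  have ej: "0 \<le> eSR j" "eSR j \<le> 1" using Cons.prems(1) by auto
  have "E (seq_pmf (map (\<lambda>j. relay_erasure_pmf NS NR (eSR j) (eRD j)) (j # js)))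
           (\<lambda>ps. H (relays_received NS ps) (\<Sum>p\<leftarrow>ps. ntrue (snd p)))
     = E SR (\<lambda>sr. E RD (\<lambda>rd. E (seq_pmf (map (\<lambda>j. relay_erasure_pmf NS NR (eSR j) (eRD j)) js))
         (\<lambda>ps. H (map2 (\<or>) sr (relays_received NS ps)) (ntrue rd + (\<Sum>p\<leftarrow>ps. ntrue (snd p))))))"
    unfolding SR_def RD_def list.map relay_erasure_pmf_def
    by (subst E_seq_pmf_Cons[where B=B], simp add: bounded, subst E_pair_pmf[where B=B])
       (auto intro!: E_abs_le bounded E_cong simp: relays_received_Cons set_replicate_pmf)
  also have "\<dots> = E SR (\<lambda>sr. E RD (\<lambda>rd. E (replicate_pmf NS (bernoulli_pmf (1 - e)))
         (\<lambda>R. E RDS (\<lambda>rds. H (map2 (\<or>) sr R) (ntrue rd + (\<Sum>rd\<leftarrow>rds. ntrue rd))))))"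
    unfolding RDS_def e_def using Cons.prems by (subst Cons.IH) auto
  also have "\<dots> = E SR (\<lambda>sr. E (replicate_pmf NS (bernoulli_pmf (1 - e)))
         (\<lambda>R. E RD (\<lambda>rd. E RDS (\<lambda>rds. H (map2 (\<or>) sr R) (ntrue rd + (\<Sum>rd\<leftarrow>rds. ntrue rd))))))"
    by (intro E_cong E_commute[where B=B] E_abs_le bounded)
  also have "\<dots> = E (replicate_pmf NS (bernoulli_pmf (1 - eSR j * e)))
         (\<lambda>R. E RD (\<lambda>rd. E RDS (\<lambda>rds. H R (ntrue rd + (\<Sum>rd\<leftarrow>rds. ntrue rd)))))"
    unfolding SR_def
    using E_replicate_bernoulli_map2_or[where x="1 - eSR j" and y="1 - e" and B=B and n=NS and
        G="\<lambda>R. E RD (\<lambda>rd. E RDS (\<lambda>rds. H R (ntrue rd + (\<Sum>rd\<leftarrow>rds. ntrue rd))))"] ej e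
    by (simp add: E_abs_le bounded)
  finally show ?case
    unfolding RD_def RDS_def e_def list.map
    by (subst E_seq_pmf_Cons[where B=B]) (simp_all add: E_abs_le bounded)
qed

lemma sum_PiE_lessThan_Suc:
  assumes "finite A"
  shows "(\<Sum>mp\<in>PiE {..<Suc L} (\<lambda>_. A). F mp) = (\<Sum>mp\<in>PiE {..<L} (\<lambda>_. A). \<Sum>y\<in>A. F (mp(L := y)))"
proof -
  have "PiE {..<Suc L} (\<lambda>_. A) = (\<lambda>(y, g). g(L := y)) ` (A \<times> PiE {..<L} (\<lambda>_. A))"
    unfolding lessThan_Suc by (rule PiE_insert_eq)
  moreover have "inj_on (\<lambda>(y, g). g(L := y)) (A \<times> PiE {..<L} (\<lambda>_. A))"
    by (rule inj_combinator) simp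
  ultimately have "(\<Sum>mp\<in>PiE {..<Suc L} (\<lambda>_. A). F mp) = (\<Sum>y\<in>A. \<Sum>g\<in>PiE {..<L} (\<lambda>_. A). F (g(L := y)))"
    by (simp add: sum.reindex case_prod_unfold sum.cartesian_product)
  then show ?thesis by (simp add: sum.swap[of _ A])
qed

lemma E_sum_ntrue_seq_replicate_bernoulli:
  assumes "\<forall>j<L. 0 \<le> eRD j \<and> eRD j \<le> 1" and G: "\<And>s. \<bar>G s\<bar> \<le> B"
  shows "E (seq_pmf (map (\<lambda>j. replicate_pmf NR (bernoulli_pmf (1 - eRD j))) [0..<L]))
           (\<lambda>rds. G (\<Sum>rd\<leftarrow>rds. ntrue rd))
       = (\<Sum>mp\<in>PiE {..<L} (\<lambda>_. {..NR}). (\<Prod>j<L. Bin (mp j) NR (eRD j)) * G (\<Sum>j<L. mp j))"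
  using assms
proof (induction L arbitrary: G)
  case (Suc L)
  define G' where "G' s = (\<Sum>k\<le>NR. Bin k NR (eRD L) * G (s + k))" for s
  have eL: "0 \<le> eRD L" "eRD L \<le> 1" using Suc.prems(1) by auto
  have G': "G' s = E (replicate_pmf NR (bernoulli_pmf (1 - eRD L))) (\<lambda>rd. G (s + ntrue rd))" for s
    unfolding G'_def by (rule E_ntrue_replicate_bernoulli[OF eL, symmetric])
  have "E (seq_pmf (map (\<lambda>j. replicate_pmf NR (bernoulli_pmf (1 - eRD j))) [0..<Suc L]))
           (\<lambda>rds. G (\<Sum>rd\<leftarrow>rds. ntrue rd))
      = E (seq_pmf (map (\<lambda>j. replicate_pmf NR (bernoulli_pmf (1 - eRD j))) [0..<L]))
           (\<lambda>rds. G' (\<Sum>rd\<leftarrow>rds. ntrue rd))"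
    unfolding G' by (simp add: E_seq_pmf_snoc[where B=B] Suc.prems)
  also have "\<dots> = (\<Sum>mp\<in>PiE {..<L} (\<lambda>_. {..NR}). (\<Prod>j<L. Bin (mp j) NR (eRD j)) * G' (\<Sum>j<L. mp j))"
    using Suc.prems by (intro Suc.IH) (auto simp: G' intro!: E_abs_le)
  also have "\<dots> = (\<Sum>mp\<in>PiE {..<Suc L} (\<lambda>_. {..NR}). (\<Prod>j<Suc L. Bin (mp j) NR (eRD j)) * G (\<Sum>j<Suc L. mp j))"
  proof -
    have "(\<Prod>j<L. Bin ((mp(L := y)) j) NR (eRD j)) = (\<Prod>j<L. Bin (mp j) NR (eRD j))"
      "(\<Sum>j<L. (mp(L := y)) j) = (\<Sum>j<L. mp j)" for mp y
      by (auto intro: prod.cong sum.cong)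
    then show ?thesis
      unfolding sum_PiE_lessThan_Suc[OF finite_atMost] G'_def
      by (simp add: sum_distrib_left algebra_simps)
  qed
  finally show ?case .
qed simp

lemma ntrue_relay_only_add_ntrue_received:
  "length sd = length R \<Longrightarrow> ntrue (relay_only sd R) + ntrue (received sd R) = ntrue R"
  by (induction sd R rule: list_induct2) (auto simp: relay_only_def)

(* k1 counts the packets received by D that also reached a relay (m_RD), k2 the others. *)
lemma E_ntrue_relay_only:
  assumes e: "0 \<le> eSD" "eSD \<le> 1" and len: "length R = NS" and F: "\<And>a b. \<bar>F a b\<bar> \<le> B"
  defines "m \<equiv> ntrue R"
  shows "E (replicate_pmf NS (bernoulli_pmf (1 - eSD))) (\<lambda>sd. F (ntrue sd) (ntrue (relay_only sd R)))
    = (\<Sum>k1\<le>m. \<Sum>k2\<le>NS - m. Bin k1 m eSD * Bin k2 (NS - m) eSD * F (k1 + k2) (m - k1))"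
proof -
  define p where "p = bernoulli_pmf (1 - eSD)"
  have "E (replicate_pmf NS p) (\<lambda>sd. F (ntrue sd) (ntrue (relay_only sd R)))
      = E (map_pmf (\<lambda>sd. (received sd R, received sd (map Not R))) (replicate_pmf (length R) p))
          (\<lambda>(a1, a2). F (ntrue a1 + ntrue a2) (m - ntrue a1))"
  proof (simp add: len, intro E_cong)
    fix sd assume "sd \<in> set_pmf (replicate_pmf NS p)"
    then have "length sd = length R" by (simp add: set_replicate_pmf len)
    from ntrue_received_add_ntrue_received_Not[OF this] ntrue_relay_only_add_ntrue_received[OF this]
    have "ntrue sd = ntrue (received sd R) + ntrue (received sd (map Not R))"
      "ntrue (relay_only sd R) = m - ntrue (received sd R)"
      unfolding m_def by linarith+
    then show "F (ntrue sd) (ntrue (relay_only sd R))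
        = F (ntrue (received sd R) + ntrue (received sd (map Not R))) (m - ntrue (received sd R))"
      by (simp add: m_def)
  qed
  also have "\<dots> = E (pair_pmf (replicate_pmf m p) (replicate_pmf (NS - m) p))
       (\<lambda>(a1, a2). F (ntrue a1 + ntrue a2) (m - ntrue a1))"
    by (subst map_received_pair_replicate_pmf) (auto simp: len m_def length_filter_Not)
  also have "\<dots> = E (replicate_pmf m p) (\<lambda>a1. E (replicate_pmf (NS - m) p) (\<lambda>a2.
       F (ntrue a1 + ntrue a2) (m - ntrue a1)))"
    by (simp add: E_pair_pmf[where B=B] F split_beta)
  also have "\<dots> = E (replicate_pmf m p) (\<lambda>a1.
       \<Sum>k2\<le>NS - m. Bin k2 (NS - m) eSD * F (ntrue a1 + k2) (m - ntrue a1))"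
    unfolding p_def by (subst E_ntrue_replicate_bernoulli[OF e]) (rule refl)
  also have "\<dots> = (\<Sum>k1\<le>m. Bin k1 m eSD * (\<Sum>k2\<le>NS - m. Bin k2 (NS - m) eSD * F (k1 + k2) (m - k1)))"
    unfolding p_def
    by (rule E_ntrue_replicate_bernoulli[OF e, where g="\<lambda>k1. \<Sum>k2\<le>NS - m. Bin k2 (NS - m) eSD * F (k1 + k2) (m - k1)"])
  finally show ?thesis
    unfolding p_def by (simp add: sum_distrib_left mult_ac)
qed


(* The inner sum of upper_bound without the restriction m' >= K - m_D, whose omitted terms vanish. *)
definition relay_sum :: "real \<Rightarrow> nat \<Rightarrow> nat \<Rightarrow> nat \<Rightarrow> (nat \<Rightarrow> real) \<Rightarrow> nat \<Rightarrow> nat \<Rightarrow> real" where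
  "relay_sum q K L NR eRD mD n = (\<Sum>mp\<in>PiE {..<L} (\<lambda>_. {..NR}).
     (\<Prod>j<L. Bin (mp j) NR (eRD j)) * P2 q ((\<Sum>j<L. mp j) + mD) (n + mD) mD K)"

lemma relay_sum_eq_E:
  assumes "\<And>j. j < L \<Longrightarrow> 0 \<le> eRD j \<and> eRD j \<le> 1"
  defines "q \<equiv> real CARD('a::{finite,field})" and "K \<equiv> CARD('k::finite)"
  shows "relay_sum q K L NR eRD mD n
    = E (seq_pmf (map (\<lambda>j. replicate_pmf NR (bernoulli_pmf (1 - eRD j))) [0..<L]))
        (\<lambda>rds. P2 q ((\<Sum>rd\<leftarrow>rds. ntrue rd) + mD) (n + mD) mD K)"
  unfolding relay_sum_def q_def K_def using assms abs_P2_le_1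
  by (subst E_sum_ntrue_seq_replicate_bernoulli[where B=1]) auto

lemma abs_relay_sum_le_1:
  assumes "\<And>j. j < L \<Longrightarrow> 0 \<le> eRD j \<and> eRD j \<le> 1"
  shows "\<bar>relay_sum (real CARD('a::{finite,field})) CARD('k::finite) L NR eRD mD n\<bar> \<le> 1"
proof -
  have "relay_sum (real CARD('a)) CARD('k) L NR eRD mD n
    = E (seq_pmf (map (\<lambda>j. replicate_pmf NR (bernoulli_pmf (1 - eRD j))) [0..<L]))
        (\<lambda>rds. P2 (real CARD('a)) ((\<Sum>rd\<leftarrow>rds. ntrue rd) + mD) (n + mD) mD CARD('k))"
    by (rule relay_sum_eq_E[OF assms])
  then show ?thesis by (simp add: E_abs_le abs_P2_le_1)
qed

lemma E_erasure_patterns_P2_eq: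
  fixes eSR eRD :: "nat \<Rightarrow> real" and eSD :: real and NS :: nat
  assumes eSR: "\<And>j. j < L \<Longrightarrow> 0 \<le> eSR j \<and> eSR j \<le> 1"
    and eRD: "\<And>j. j < L \<Longrightarrow> 0 \<le> eRD j \<and> eRD j \<le> 1"
  defines "q \<equiv> real CARD('a::{finite,field})" and "K \<equiv> CARD('k::finite)"
    and "SD \<equiv> replicate_pmf NS (bernoulli_pmf (1 - eSD))"
  shows "E SD (\<lambda>sd.
      E (seq_pmf (map (\<lambda>j. relay_erasure_pmf NS NR (eSR j) (eRD j)) [0..<L])) (\<lambda>ps.
        P2 q ((\<Sum>p\<leftarrow>ps. ntrue (snd p)) + ntrue sd)
             (ntrue (relay_only sd (relays_received NS ps)) + ntrue sd) (ntrue sd) K))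
    = E (replicate_pmf NS (bernoulli_pmf (1 - (\<Prod>j<L. eSR j)))) (\<lambda>R.
        E SD (\<lambda>sd. relay_sum q K L NR eRD (ntrue sd) (ntrue (relay_only sd R))))"
proof -
  define RDS where "RDS = seq_pmf (map (\<lambda>j. replicate_pmf NR (bernoulli_pmf (1 - eRD j))) [0..<L])"
  have bounded: "\<bar>P2 q (m1 + m12) (m2 + m12) m12 K\<bar> \<le> 1" for m1 m2 m12
    unfolding q_def K_def by (rule abs_P2_le_1)
  have relay_sum_E: "relay_sum q K L NR eRD mD n = E RDS (\<lambda>rds. P2 q ((\<Sum>rd\<leftarrow>rds. ntrue rd) + mD) (n + mD) mD K)"
    for mD n
    unfolding RDS_def q_def K_def by (rule relay_sum_eq_E[OF eRD])
  have "(\<Prod>j\<leftarrow>[0..<L]. eSR j) = (\<Prod>j<L. eSR j)"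
    by (simp add: prod.distinct_set_conv_list[symmetric] atLeast0LessThan)
  then have "E SD (\<lambda>sd. E (seq_pmf (map (\<lambda>j. relay_erasure_pmf NS NR (eSR j) (eRD j)) [0..<L])) (\<lambda>ps.
        P2 q ((\<Sum>p\<leftarrow>ps. ntrue (snd p)) + ntrue sd)
             (ntrue (relay_only sd (relays_received NS ps)) + ntrue sd) (ntrue sd) K))
    = E (replicate_pmf NS (bernoulli_pmf (1 - (\<Prod>j<L. eSR j)))) (\<lambda>R. E RDS (\<lambda>rds.
        E SD (\<lambda>sd. P2 q ((\<Sum>rd\<leftarrow>rds. ntrue rd) + ntrue sd) (ntrue (relay_only sd R) + ntrue sd) (ntrue sd) K)))"
    unfolding RDS_def using eSR
    by (subst E_commute[OF bounded], subst E_relays_received[where B=1]) (auto intro: E_abs_le bounded)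
  also have "\<dots> = E (replicate_pmf NS (bernoulli_pmf (1 - (\<Prod>j<L. eSR j)))) (\<lambda>R.
        E SD (\<lambda>sd. relay_sum q K L NR eRD (ntrue sd) (ntrue (relay_only sd R))))"
    unfolding relay_sum_E by (intro E_cong E_commute[OF bounded])
  finally show ?thesis .
qed

lemma E_erasure_patterns_P2_eq_sum:
  fixes eSR eRD :: "nat \<Rightarrow> real"
  assumes eSD: "0 \<le> eSD" "eSD \<le> 1"
    and eSR: "\<And>j. j < L \<Longrightarrow> 0 \<le> eSR j \<and> eSR j \<le> 1"
    and eRD: "\<And>j. j < L \<Longrightarrow> 0 \<le> eRD j \<and> eRD j \<le> 1"
  defines "q \<equiv> real CARD('a::{finite,field})" and "K \<equiv> CARD('k::finite)"
  shows "E (replicate_pmf NS (bernoulli_pmf (1 - eSD))) (\<lambda>sd.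
      E (seq_pmf (map (\<lambda>j. relay_erasure_pmf NS NR (eSR j) (eRD j)) [0..<L])) (\<lambda>ps.
        P2 q ((\<Sum>p\<leftarrow>ps. ntrue (snd p)) + ntrue sd)
             (ntrue (relay_only sd (relays_received NS ps)) + ntrue sd) (ntrue sd) K))
    = (\<Sum>m\<le>NS. \<Sum>k1\<le>m. \<Sum>k2\<le>NS - m. Bin m NS (\<Prod>j<L. eSR j) * (Bin k1 m eSD * Bin k2 (NS - m) eSD)
          * relay_sum q K L NR eRD (k1 + k2) (m - k1))"
proof -
  define W where "W = relay_sum q K L NR eRD"
  have W_bounded: "\<bar>W mD n\<bar> \<le> 1" for mD n
    unfolding W_def q_def K_def by (rule abs_relay_sum_le_1[OF eRD])
  have et: "0 \<le> (\<Prod>j<L. eSR j)" "(\<Prod>j<L. eSR j) \<le> 1"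
    using eSR by (auto intro: prod_nonneg prod_le_1)
  have "E (replicate_pmf NS (bernoulli_pmf (1 - eSD))) (\<lambda>sd.
      E (seq_pmf (map (\<lambda>j. relay_erasure_pmf NS NR (eSR j) (eRD j)) [0..<L])) (\<lambda>ps.
        P2 q ((\<Sum>p\<leftarrow>ps. ntrue (snd p)) + ntrue sd)
             (ntrue (relay_only sd (relays_received NS ps)) + ntrue sd) (ntrue sd) K))
    = E (replicate_pmf NS (bernoulli_pmf (1 - (\<Prod>j<L. eSR j)))) (\<lambda>R.
        E (replicate_pmf NS (bernoulli_pmf (1 - eSD))) (\<lambda>sd. W (ntrue sd) (ntrue (relay_only sd R))))"
    unfolding W_def q_def K_def by (rule E_erasure_patterns_P2_eq[OF eSR eRD])
  also have "\<dots> = E (replicate_pmf NS (bernoulli_pmf (1 - (\<Prod>j<L. eSR j)))) (\<lambda>R. (\<lambda>m.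
      \<Sum>k1\<le>m. \<Sum>k2\<le>NS - m. Bin k1 m eSD * Bin k2 (NS - m) eSD * W (k1 + k2) (m - k1)) (ntrue R))"
    by (intro E_cong E_ntrue_relay_only[OF eSD _ W_bounded]) (simp add: set_replicate_pmf)
  also have "\<dots> = (\<Sum>m\<le>NS. Bin m NS (\<Prod>j<L. eSR j) *
      (\<Sum>k1\<le>m. \<Sum>k2\<le>NS - m. Bin k1 m eSD * Bin k2 (NS - m) eSD * W (k1 + k2) (m - k1)))"
    by (rule E_ntrue_replicate_bernoulli[OF et])
  finally show ?thesis
    unfolding W_def by (simp add: sum_distrib_left mult_ac)
qed

lemma sum_reindex_erasure_counts:
  fixes g :: "nat \<Rightarrow> nat \<Rightarrow> nat \<Rightarrow> real"
  shows "(\<Sum>m\<le>NS. \<Sum>k1\<le>m. \<Sum>k2\<le>NS - m. g m (k1 + k2) k1)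
    = (\<Sum>(m, mD, mRD) \<in> {(m, mD, mRD). m \<le> NS \<and> mD \<le> NS
                           \<and> int m + int mD - int NS \<le> int mRD \<and> mRD \<le> min m mD}. g m mD mRD)"
proof -
  define D where "D = (SIGMA m:{..NS}. SIGMA k1:{..m}. {..NS - m})"
  have "(\<Sum>m\<le>NS. \<Sum>k1\<le>m. \<Sum>k2\<le>NS - m. g m (k1 + k2) k1) = (\<Sum>(m, k1, k2)\<in>D. g m (k1 + k2) k1)"
    unfolding D_def by (simp add: sum.Sigma case_prod_unfold)
  also have "\<dots> = (\<Sum>(m, mD, mRD) \<in> {(m, mD, mRD). m \<le> NS \<and> mD \<le> NS
                           \<and> int m + int mD - int NS \<le> int mRD \<and> mRD \<le> min m mD}. g m mD mRD)"
  proof (rule sum.reindex_bij_betw[of "\<lambda>(m, k1, k2). (m, k1 + k2, k1)", THEN trans[rotated]])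
    show "bij_betw (\<lambda>(m, k1, k2). (m, k1 + k2, k1)) D {(m, mD, mRD). m \<le> NS \<and> mD \<le> NS
                           \<and> int m + int mD - int NS \<le> int mRD \<and> mRD \<le> min m mD}"
      by (rule bij_betwI[where g="\<lambda>(m, mD, mRD). (m, mRD, mD - mRD)"]) (auto simp: D_def)
  qed (auto intro: sum.cong)
  finally show ?thesis .
qed

lemma alpha_eq_Bin:
  assumes "m \<le> NS" "k1 \<le> m" "k2 \<le> NS - m"
  shows "alpha L NS eSR eSD m (k1 + k2) k1 =
    Bin m NS (\<Prod>j<L. eSR j) * (Bin k1 m eSD * Bin k2 (NS - m) eSD)"
proof -
  define et where "et = (\<Prod>j<L. eSR j)"
  have choose: "real (NS choose k1) * real ((NS - k1) choose (m - k1)) = real (NS choose m) * real (m choose k1)"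
    using choose_mult[OF assms(2,1)] by (metis of_nat_mult)
  have "NS - (k1 + k2) = (m - k1) + (NS - m - k2)" using assms by arith
  then have "alpha L NS eSR eSD m (k1 + k2) k1 =
     real (NS choose m) * real (m choose k1) * real ((NS - m) choose k2)
      * (1 - et) ^ m * et ^ (NS - m) * ((1 - eSD) ^ k1 * (1 - eSD) ^ k2) * (eSD ^ (m - k1) * eSD ^ (NS - m - k2))"
    unfolding alpha_def et_def Let_def choose[symmetric] power_add[symmetric] by simp
  then show ?thesis
    unfolding Bin_def et_def by (simp add: mult_ac)
qed

lemma relay_sum_eq_restricted:
  "relay_sum q K L NR eRD mD n
     = (\<Sum>mp \<in> {mp \<in> PiE {..<L} (\<lambda>_. {..NR}). int K - int mD \<le> int (\<Sum>j<L. mp j)}.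
          (\<Prod>j<L. Bin (mp j) NR (eRD j)) * P2 q ((\<Sum>j<L. mp j) + mD) (n + mD) mD K)"
  unfolding relay_sum_def
proof (rule sum.mono_neutral_right)
  show "\<forall>mp\<in>PiE {..<L} (\<lambda>_. {..NR}) - {mp \<in> PiE {..<L} (\<lambda>_. {..NR}). int K - int mD \<le> int (\<Sum>j<L. mp j)}.
      (\<Prod>j<L. Bin (mp j) NR (eRD j)) * P2 q ((\<Sum>j<L. mp j) + mD) (n + mD) mD K = 0"
    by (auto simp: P2_eq_0 simp del: of_nat_sum)
qed (auto intro: finite_PiE)

lemma upper_bound_eq_sum:
  "upper_bound q K L NS NR eSD eSR eRD
    = (\<Sum>m\<le>NS. \<Sum>k1\<le>m. \<Sum>k2\<le>NS - m. Bin m NS (\<Prod>j<L. eSR j) * (Bin k1 m eSD * Bin k2 (NS - m) eSD)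
          * relay_sum q K L NR eRD (k1 + k2) (m - k1))"
proof -
  have "(\<Sum>m\<le>NS. \<Sum>k1\<le>m. \<Sum>k2\<le>NS - m. Bin m NS (\<Prod>j<L. eSR j) * (Bin k1 m eSD * Bin k2 (NS - m) eSD)
          * relay_sum q K L NR eRD (k1 + k2) (m - k1))
      = (\<Sum>m\<le>NS. \<Sum>k1\<le>m. \<Sum>k2\<le>NS - m. alpha L NS eSR eSD m (k1 + k2) k1
          * relay_sum q K L NR eRD (k1 + k2) (m - k1))"
    by (intro sum.cong refl) (simp add: alpha_eq_Bin)
  also have "\<dots> = (\<Sum>(m, mD, mRD) \<in> {(m, mD, mRD). m \<le> NS \<and> mD \<le> NS
                           \<and> int m + int mD - int NS \<le> int mRD \<and> mRD \<le> min m mD}.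
        alpha L NS eSR eSD m mD mRD * relay_sum q K L NR eRD mD (m - mRD))"
    by (rule sum_reindex_erasure_counts)
  also have "\<dots> = upper_bound q K L NS NR eSD eSR eRD"
    unfolding upper_bound_def relay_sum_eq_restricted
  proof (rule sum.mono_neutral_right, goal_cases)
    case 1
    show "finite {(m, mD, mRD). m \<le> NS \<and> mD \<le> NS \<and> int m + int mD - int NS \<le> int mRD \<and> mRD \<le> min m mD}"
      by (rule finite_subset[of _ "{..NS} \<times> {..NS} \<times> {..NS}"]) auto
  next
    case 3
    show ?case
    proof
      fix x assume "x \<in> {(m, mD, mRD). m \<le> NS \<and> mD \<le> NS \<and> int m + int mD - int NS \<le> int mRD \<and> mRD \<le> min m mD}
        - {(m, mD, mRD). K \<le> m + mD \<and> m \<le> NS \<and> mD \<le> NS \<and> int m + int mD - int NS \<le> int mRD \<and> mRD \<le> min m mD}"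
      then obtain m mD mRD where x: "x = (m, mD, mRD)" "m + mD < K" "mRD \<le> m" "mRD \<le> mD"
        by (cases x) (auto simp: not_le)
      then have "P2 q (m' + mD) (m - mRD + mD) mD K = 0" for m'
        by (intro P2_eq_0) auto
      then show "(\<lambda>(m, mD, mRD). alpha L NS eSR eSD m mD mRD *
          (\<Sum>mp | mp \<in> PiE {..<L} (\<lambda>_. {..NR}) \<and> int K - int mD \<le> int (\<Sum>j<L. mp j).
             (\<Prod>j<L. Bin (mp j) NR (eRD j)) * P2 q ((\<Sum>j<L. mp j) + mD) (m - mRD + mD) mD K)) x = 0"
        unfolding x by simp
    qed
  qed auto
  finally show ?thesis ..
qed


theorem proposition1:
  fixes T :: "('a::{finite,field} ^ 'k) itself"
    and L NS NR :: nat and eSD :: real and eSR eRD :: "nat \<Rightarrow> real"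
  assumes "CARD('k) \<ge> 1" and "L \<ge> 1" and "NS \<ge> CARD('k)" and "NR \<ge> 1"
    and "0 \<le> eSD" and "eSD \<le> 1"
    and "\<And>j. j < L \<Longrightarrow> 0 \<le> eSR j \<and> eSR j \<le> 1"
    and "\<And>j. j < L \<Longrightarrow> 0 \<le> eRD j \<and> eRD j \<le> 1"
  shows "success_prob L NS NR eSD eSR eRD T
           \<le> upper_bound (real CARD('a)) CARD('k) L NS NR eSD eSR eRD"
proof -
  have "success_prob L NS NR eSD eSR eRD T \<le>
    E (replicate_pmf NS (bernoulli_pmf (1 - eSD))) (\<lambda>sd.
      E (seq_pmf (map (\<lambda>j. relay_erasure_pmf NS NR (eSR j) (eRD j)) [0..<L])) (\<lambda>ps.
        P2 (real CARD('a)) ((\<Sum>p\<leftarrow>ps. ntrue (snd p)) + ntrue sd)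
             (ntrue (relay_only sd (relays_received NS ps)) + ntrue sd) (ntrue sd) CARD('k)))"
    by (rule success_prob_le)
  also have "\<dots> = (\<Sum>m\<le>NS. \<Sum>k1\<le>m. \<Sum>k2\<le>NS - m.
      Bin m NS (\<Prod>j<L. eSR j) * (Bin k1 m eSD * Bin k2 (NS - m) eSD)
        * relay_sum (real CARD('a)) CARD('k) L NR eRD (k1 + k2) (m - k1))"
    using assms(5-8) by (rule E_erasure_patterns_P2_eq_sum)
  also have "\<dots> = upper_bound (real CARD('a)) CARD('k) L NS NR eSD eSR eRD"
    by (rule upper_bound_eq_sum[symmetric])
  finally show ?thesis .
qed

end
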